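(* Given an operator system $\mathcal V \subset B(H)$ and a projection $p \in \mathcal V$, with $q = I-p$, then $(M_2(\mathcal V) / J_{p\oplus q}, \{\widetilde{C}(p_n \oplus q_n)\}_n, (p\oplus q) + J_{p \oplus q})$ is an operator system.
   Context: For $n \in \mathbb N$ let $p_n = I_n \otimes p$, $q_n = I_n \otimes q$, and define $C(p_n \oplus q_n) = \{ x \in M_{2n}(\mathcal V) : x = x^*, \ (p_n \oplus q_n)x(p_n \oplus q_n) \in B(H^{2n})^+\}$, where $M_n(M_2(\mathcal V))$ is identified with $M_2(M_n(\mathcal V)) = M_{2n}(\mathcal V)$ via the canonical shuffle. Let $J_{p \oplus q} = \operatorname{span}\big(C(p\oplus q) \cap -C(p\oplus q)\big) \subseteq M_2(\mathcal V)$, and let $\widetilde{C}(p_n \oplus q_n) = \{ (x_{ij} + J_{p\oplus q}) \in M_n(M_2(\mathcal V)/J_{p\oplus q}) : (x_{ij}) \in C(p_n\oplus q_n)\}$. *)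

theory Defs
  imports "HOL-Analysis.Analysis"
begin

class complex_inner_space = ab_group_add +
  fixes cscale :: "complex \<Rightarrow> 'a \<Rightarrow> 'a"
    and cinner :: "'a \<Rightarrow> 'a \<Rightarrow> complex"
  assumes cscale_add_right: "cscale a (x + y) = cscale a x + cscale a y"
    and cscale_add_left: "cscale (a + b) x = cscale a x + cscale b x"
    and cscale_cscale: "cscale a (cscale b x) = cscale (a * b) x"
    and cscale_one: "cscale 1 x = x"
    and cinner_add_left: "cinner (x + y) z = cinner x z + cinner y z"
    and cinner_cscale_left: "cinner (cscale a x) y = a * cinner x y"
    and cinner_commute: "cinner y x = cnj (cinner x y)"
    and cinner_self_nonneg: "Im (cinner x x) = 0 \<and> Re (cinner x x) \<ge> 0"
    and cinner_self_eq_zero: "cinner x x = 0 \<Longrightarrow> x = 0"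

definition cnorm :: "'a::complex_inner_space \<Rightarrow> real" where
  "cnorm x = sqrt (Re (cinner x x))"

class chilbert = complex_inner_space +
  assumes chilbert_complete:
    "(\<forall>e>0. \<exists>N::nat. \<forall>m\<ge>N. \<forall>n\<ge>N. sqrt (Re (cinner (X m - X n) (X m - X n))) < e) \<Longrightarrow>
       (\<exists>L. \<forall>e>0. \<exists>N::nat. \<forall>n\<ge>N. sqrt (Re (cinner (X n - L) (X n - L))) < e)"

type_synonym 'h op = "'h \<Rightarrow> 'h"

definition bop :: "('h::chilbert) op set" where
  "bop = {T. (\<forall>x y. T (x + y) = T x + T y) \<and> (\<forall>c x. T (cscale c x) = cscale c (T x))
            \<and> (\<exists>K. \<forall>x. cnorm (T x) \<le> K * cnorm x)}"

definition adj :: "('h::chilbert) op \<Rightarrow> 'h op" where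
  "adj T = (THE S. \<forall>x y. cinner (T x) y = cinner x (S y))"

definition zop :: "('h::chilbert) op" where "zop = (\<lambda>_. 0)"
definition opadd :: "('h::chilbert) op \<Rightarrow> 'h op \<Rightarrow> 'h op" where "opadd S T = (\<lambda>x. S x + T x)"
definition opscale :: "complex \<Rightarrow> ('h::chilbert) op \<Rightarrow> 'h op" where "opscale c T = (\<lambda>x. cscale c (T x))"

definition concrete_opsys :: "('h::chilbert) op set \<Rightarrow> bool" where
  "concrete_opsys V \<longleftrightarrow> V \<subseteq> bop \<and> id \<in> V \<and> (\<forall>S\<in>V. \<forall>T\<in>V. opadd S T \<in> V)
     \<and> (\<forall>c. \<forall>T\<in>V. opscale c T \<in> V) \<and> (\<forall>T\<in>V. adj T \<in> V)"

definition is_projection :: "('h::chilbert) op \<Rightarrow> bool" where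
  "is_projection p \<longleftrightarrow> adj p = p \<and> p \<circ> p = p"

section \<open>Matrices of operators (indices below n; zero outside)\<close>

type_synonym 'h opmat = "nat \<Rightarrow> nat \<Rightarrow> 'h op"

definition opmats :: "nat \<Rightarrow> ('h::chilbert) op set \<Rightarrow> 'h opmat set" where
  "opmats n V = {X. \<forall>i j. (i < n \<and> j < n \<longrightarrow> X i j \<in> V) \<and> (\<not> (i < n \<and> j < n) \<longrightarrow> X i j = zop)}"

definition opmat_star :: "nat \<Rightarrow> ('h::chilbert) opmat \<Rightarrow> 'h opmat" where
  "opmat_star n X = (\<lambda>i j. if i < n \<and> j < n then adj (X j i) else zop)"

definition opmat_mult :: "nat \<Rightarrow> ('h::chilbert) opmat \<Rightarrow> 'h opmat \<Rightarrow> 'h opmat" where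
  "opmat_mult n A B = (\<lambda>i k. if i < n \<and> k < n then (\<lambda>x. \<Sum>j<n. A i j (B j k x)) else zop)"

definition opmat_add :: "nat \<Rightarrow> ('h::chilbert) opmat \<Rightarrow> 'h opmat \<Rightarrow> 'h opmat" where
  "opmat_add n A B = (\<lambda>i j. if i < n \<and> j < n then opadd (A i j) (B i j) else zop)"

definition opmat_scale :: "nat \<Rightarrow> complex \<Rightarrow> ('h::chilbert) opmat \<Rightarrow> 'h opmat" where
  "opmat_scale n c A = (\<lambda>i j. if i < n \<and> j < n then opscale c (A i j) else zop)"

text \<open>Positivity in B(H^N): the operator X on H^N satisfies \<langle>X\<xi>,\<xi>\<rangle> \<ge> 0 for all \<xi>.\<close>
definition opmat_pos :: "nat \<Rightarrow> ('h::chilbert) opmat \<Rightarrow> bool" where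
  "opmat_pos N X \<longleftrightarrow> (\<forall>\<xi>::nat \<Rightarrow> 'h.
     let s = (\<Sum>i<N. cinner (\<Sum>j<N. X i j (\<xi> j)) (\<xi> i)) in Im s = 0 \<and> Re s \<ge> 0)"

text \<open>p_n \<oplus> q_n \<in> M_2(M_n(V)) = M_{2n}(V): diagonal with p in the first n, q = I - p in the last n slots.\<close>
definition pq_diag :: "nat \<Rightarrow> ('h::chilbert) op \<Rightarrow> 'h opmat" where
  "pq_diag n p = (\<lambda>i j. if i < 2*n \<and> j < 2*n \<and> i = j
       then (if i < n then p else (\<lambda>x. x - p x)) else zop)"

definition Ccone :: "('h::chilbert) op set \<Rightarrow> 'h op \<Rightarrow> nat \<Rightarrow> 'h opmat set" where
  "Ccone V p n = {x \<in> opmats (2*n) V. x = opmat_star (2*n) x \<and>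
      opmat_pos (2*n) (opmat_mult (2*n) (pq_diag n p) (opmat_mult (2*n) x (pq_diag n p)))}"

inductive_set opmat_span :: "('h::chilbert) opmat set \<Rightarrow> 'h opmat set" for S where
  span_zero: "(\<lambda>i j. zop) \<in> opmat_span S"
| span_base: "x \<in> S \<Longrightarrow> x \<in> opmat_span S"
| span_add: "x \<in> opmat_span S \<Longrightarrow> y \<in> opmat_span S \<Longrightarrow> opmat_add 2 x y \<in> opmat_span S"
| span_scale: "x \<in> opmat_span S \<Longrightarrow> opmat_scale 2 c x \<in> opmat_span S"

definition Jpq :: "('h::chilbert) op set \<Rightarrow> 'h op \<Rightarrow> 'h opmat set" where
  "Jpq V p = opmat_span (Ccone V p 1 \<inter> {x. opmat_scale 2 (-1) x \<in> Ccone V p 1})"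

text \<open>Canonical shuffle M_n(M_2(V)) \<rightarrow> M_2(M_n(V)) = M_{2n}(V):
  entry (i,j) of block (a,b) sits at position (a*n+i, b*n+j).\<close>
definition shuffle :: "nat \<Rightarrow> (nat \<Rightarrow> nat \<Rightarrow> ('h::chilbert) opmat) \<Rightarrow> 'h opmat" where
  "shuffle n y = (\<lambda>r s. if r < 2*n \<and> s < 2*n then y (r mod n) (s mod n) (r div n) (s div n) else zop)"

section \<open>Abstract operator systems (Choi--Effros)\<close>

record 'w osys =
  carrier :: "'w set"
  zero :: 'w
  add :: "'w \<Rightarrow> 'w \<Rightarrow> 'w"
  scale :: "complex \<Rightarrow> 'w \<Rightarrow> 'w"
  star :: "'w \<Rightarrow> 'w"
  cone :: "nat \<Rightarrow> (nat \<Rightarrow> nat \<Rightarrow> 'w) set"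
  unit :: 'w

definition mats :: "('w, 'b) osys_scheme \<Rightarrow> nat \<Rightarrow> (nat \<Rightarrow> nat \<Rightarrow> 'w) set" where
  "mats S n = {X. \<forall>i j. (i < n \<and> j < n \<longrightarrow> X i j \<in> carrier S) \<and> (\<not> (i < n \<and> j < n) \<longrightarrow> X i j = zero S)}"

definition mzero :: "('w, 'b) osys_scheme \<Rightarrow> nat \<Rightarrow> nat \<Rightarrow> 'w" where
  "mzero S = (\<lambda>i j. zero S)"

definition madd :: "('w, 'b) osys_scheme \<Rightarrow> nat \<Rightarrow> (nat \<Rightarrow> nat \<Rightarrow> 'w) \<Rightarrow> (nat \<Rightarrow> nat \<Rightarrow> 'w) \<Rightarrow> nat \<Rightarrow> nat \<Rightarrow> 'w" where
  "madd S n X Y = (\<lambda>i j. if i < n \<and> j < n then add S (X i j) (Y i j) else zero S)"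

definition mscale :: "('w, 'b) osys_scheme \<Rightarrow> nat \<Rightarrow> complex \<Rightarrow> (nat \<Rightarrow> nat \<Rightarrow> 'w) \<Rightarrow> nat \<Rightarrow> nat \<Rightarrow> 'w" where
  "mscale S n c X = (\<lambda>i j. if i < n \<and> j < n then scale S c (X i j) else zero S)"

definition mstar :: "('w, 'b) osys_scheme \<Rightarrow> nat \<Rightarrow> (nat \<Rightarrow> nat \<Rightarrow> 'w) \<Rightarrow> nat \<Rightarrow> nat \<Rightarrow> 'w" where
  "mstar S n X = (\<lambda>i j. if i < n \<and> j < n then star S (X j i) else zero S)"

definition hermitians :: "('w, 'b) osys_scheme \<Rightarrow> nat \<Rightarrow> (nat \<Rightarrow> nat \<Rightarrow> 'w) set" where
  "hermitians S n = {X \<in> mats S n. mstar S n X = X}"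

definition wsum :: "('w, 'b) osys_scheme \<Rightarrow> (nat \<Rightarrow> 'w) \<Rightarrow> nat \<Rightarrow> 'w" where
  "wsum S f n = foldr (add S) (map f [0..<n]) (zero S)"

definition congr :: "('w, 'b) osys_scheme \<Rightarrow> nat \<Rightarrow> nat \<Rightarrow> (nat \<Rightarrow> nat \<Rightarrow> complex) \<Rightarrow> (nat \<Rightarrow> nat \<Rightarrow> 'w) \<Rightarrow> nat \<Rightarrow> nat \<Rightarrow> 'w" where
  "congr S n m \<alpha> X = (\<lambda>k l. if k < m \<and> l < m then
      wsum S (\<lambda>i. wsum S (\<lambda>j. scale S (cnj (\<alpha> i k) * \<alpha> j l) (X i j)) n) n else zero S)"

definition unitmat :: "('w, 'b) osys_scheme \<Rightarrow> nat \<Rightarrow> nat \<Rightarrow> nat \<Rightarrow> 'w" where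
  "unitmat S n = (\<lambda>i j. if i < n \<and> j < n \<and> i = j then unit S else zero S)"

definition complex_vector_space :: "('w, 'b) osys_scheme \<Rightarrow> bool" where
  "complex_vector_space S \<longleftrightarrow>
     zero S \<in> carrier S \<and>
     (\<forall>x\<in>carrier S. \<forall>y\<in>carrier S. add S x y \<in> carrier S) \<and>
     (\<forall>c. \<forall>x\<in>carrier S. scale S c x \<in> carrier S) \<and>
     (\<forall>x\<in>carrier S. \<forall>y\<in>carrier S. \<forall>z\<in>carrier S. add S (add S x y) z = add S x (add S y z)) \<and>
     (\<forall>x\<in>carrier S. \<forall>y\<in>carrier S. add S x y = add S y x) \<and>
     (\<forall>x\<in>carrier S. add S (zero S) x = x) \<and>
     (\<forall>x\<in>carrier S. \<exists>y\<in>carrier S. add S x y = zero S) \<and>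
     (\<forall>a. \<forall>x\<in>carrier S. \<forall>y\<in>carrier S. scale S a (add S x y) = add S (scale S a x) (scale S a y)) \<and>
     (\<forall>a b. \<forall>x\<in>carrier S. scale S (a + b) x = add S (scale S a x) (scale S b x)) \<and>
     (\<forall>a b. \<forall>x\<in>carrier S. scale S a (scale S b x) = scale S (a * b) x) \<and>
     (\<forall>x\<in>carrier S. scale S 1 x = x)"

definition star_vector_space :: "('w, 'b) osys_scheme \<Rightarrow> bool" where
  "star_vector_space S \<longleftrightarrow> complex_vector_space S \<and>
     (\<forall>x\<in>carrier S. star S x \<in> carrier S) \<and>
     (\<forall>x\<in>carrier S. star S (star S x) = x) \<and>
     (\<forall>x\<in>carrier S. \<forall>y\<in>carrier S. star S (add S x y) = add S (star S x) (star S y)) \<and>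
     (\<forall>c. \<forall>x\<in>carrier S. star S (scale S c x) = scale S (cnj c) (star S x))"

definition matrix_ordered :: "('w, 'b) osys_scheme \<Rightarrow> bool" where
  "matrix_ordered S \<longleftrightarrow> star_vector_space S \<and>
     (\<forall>n\<ge>1. cone S n \<subseteq> hermitians S n) \<and>
     (\<forall>n\<ge>1. \<forall>X\<in>cone S n. \<forall>Y\<in>cone S n. madd S n X Y \<in> cone S n) \<and>
     (\<forall>n\<ge>1. \<forall>r::real. r \<ge> 0 \<longrightarrow> (\<forall>X\<in>cone S n. mscale S n (complex_of_real r) X \<in> cone S n)) \<and>
     (\<forall>n\<ge>1. cone S n \<inter> {X. mscale S n (-1) X \<in> cone S n} = {mzero S}) \<and>
     (\<forall>n\<ge>1. \<forall>m\<ge>1. \<forall>\<alpha>. \<forall>X\<in>cone S n. congr S n m \<alpha> X \<in> cone S m)"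

definition archimedean_matrix_order_unit :: "('w, 'b) osys_scheme \<Rightarrow> bool" where
  "archimedean_matrix_order_unit S \<longleftrightarrow> unit S \<in> carrier S \<and> star S (unit S) = unit S \<and>
     (\<forall>n\<ge>1. \<forall>X\<in>hermitians S n. \<exists>r::real. r > 0 \<and>
          madd S n (mscale S n (complex_of_real r) (unitmat S n)) X \<in> cone S n) \<and>
     (\<forall>n\<ge>1. \<forall>X\<in>hermitians S n.
          (\<forall>r::real. r > 0 \<longrightarrow> madd S n (mscale S n (complex_of_real r) (unitmat S n)) X \<in> cone S n)
          \<longrightarrow> X \<in> cone S n)"

definition operator_system :: "('w, 'b) osys_scheme \<Rightarrow> bool" where
  "operator_system S \<longleftrightarrow> matrix_ordered S \<and> archimedean_matrix_order_unit S"

definition coset :: "('h::chilbert) opmat set \<Rightarrow> 'h opmat \<Rightarrow> 'h opmat set" where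
  "coset J x = {opmat_add 2 x j | j. j \<in> J}"

definition rep :: "('h::chilbert) opmat set \<Rightarrow> 'h opmat" where
  "rep A = (SOME x. x \<in> A)"

definition quotient_osys :: "('h::chilbert) op set \<Rightarrow> 'h op \<Rightarrow> ('h opmat set) osys" where
  "quotient_osys V p = (let J = Jpq V p in
     \<lparr> carrier = coset J ` opmats 2 V,
       zero = coset J (\<lambda>i j. zop),
       add = (\<lambda>A B. coset J (opmat_add 2 (rep A) (rep B))),
       scale = (\<lambda>c A. coset J (opmat_scale 2 c (rep A))),
       star = (\<lambda>A. coset J (opmat_star 2 (rep A))),
       cone = (\<lambda>n. {(\<lambda>i j. if i < n \<and> j < n then coset J (y i j) else coset J (\<lambda>i j. zop)) | y.
                     (\<forall>i j. (i < n \<and> j < n \<longrightarrow> y i j \<in> opmats 2 V) \<and>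
                            (\<not> (i < n \<and> j < n) \<longrightarrow> y i j = (\<lambda>a b. zop)))
                     \<and> shuffle n y \<in> Ccone V p n}),
       unit = coset J (pq_diag 1 p) \<rparr>)"

end

theory Submission
  imports Defs
begin

(*
  A coset of J is determined by the compression (p (+) q) x (p (+) q): an element of
  C(p (+) q) /\ -C(p (+) q) is a hermitian matrix whose compressed quadratic form vanishes,
  hence (by polarization) has zero compression, and conversely every matrix with zero
  compression is a combination of two such hermitian ones.  So the quotient cone at level n
  consists of the cosets of lifts y in M_n(M_2(V)) whose shuffled compression defines a
  positive form on H^2n, and every axiom reduces to a property of these forms: they add and
  scale, a congruence by alpha pulls back the form along (I_2 (x) alpha), a form that is both
  positive and negative vanishes (properness), and the form of the unit is
  ||(p_n (+) q_n) xi||^2, which dominates the form of any lift up to a constant (the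
  Archimedean order unit).  Since B(H) is given abstractly, adjoints are first shown to exist
  via the Riesz representation theorem.
*)

section \<open>Complex inner product spaces\<close>

interpretation cs: module "cscale :: complex \<Rightarrow> 'a::complex_inner_space \<Rightarrow> 'a"
  by standard (simp_all add: cscale_add_right cscale_add_left cscale_cscale cscale_one)

lemma cinner_add_right: "cinner x (y + z) = cinner x y + cinner x z"
  by (metis cinner_commute cinner_add_left complex_cnj_add)

lemma cinner_cscale_right: "cinner x (cscale a y) = cnj a * cinner x y"
  by (metis cinner_commute cinner_cscale_left complex_cnj_mult)

interpretation cinner_left: additive "\<lambda>x. cinner x (y::'a::complex_inner_space)"
  by standard (rule cinner_add_left)

interpretation cinner_right: additive "\<lambda>y. cinner (x::'a::complex_inner_space) y"
  by standard (rule cinner_add_right)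

lemma cinner_zero_left [simp]: "cinner 0 x = 0"
  by (rule cinner_left.zero)

lemma cinner_zero_right [simp]: "cinner x 0 = 0"
  by (rule cinner_right.zero)

lemma cinner_diff_left: "cinner (x - z) y = cinner x y - cinner z y"
  by (rule cinner_left.diff)

lemma cinner_diff_right: "cinner x (y - z) = cinner x y - cinner x z"
  by (rule cinner_right.diff)

lemma cinner_sum_left: "cinner (sum f A) y = (\<Sum>i\<in>A. cinner (f i) y)"
  by (rule cinner_left.sum)

lemma cinner_sum_right: "cinner x (sum f A) = (\<Sum>i\<in>A. cinner x (f i))"
  by (rule cinner_right.sum)

lemma cinner_minus_right: "cinner x (- y) = - cinner x y"
  by (rule cinner_right.minus)

lemma cinner_self_Im [simp]: "Im (cinner x x) = 0"
  using cinner_self_nonneg by blast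

lemma cinner_self_Re_nonneg [simp]: "Re (cinner x x) \<ge> 0"
  using cinner_self_nonneg by blast

lemma cinner_self_eq_zero_iff [simp]: "cinner x x = 0 \<longleftrightarrow> x = 0"
  using cinner_self_eq_zero by auto

lemma cnorm_nonneg [simp]: "cnorm x \<ge> 0"
  by (simp add: cnorm_def)

lemma power2_cnorm: "(cnorm x)\<^sup>2 = Re (cinner x x)"
  by (simp add: cnorm_def)

lemma cinner_self_cnorm: "cinner x x = complex_of_real ((cnorm x)\<^sup>2)"
  by (simp add: power2_cnorm complex_eq_iff)

lemma cnorm_eq_zero_iff [simp]: "cnorm x = 0 \<longleftrightarrow> x = 0"
  by (metis cinner_self_cnorm cinner_self_eq_zero_iff of_real_eq_0_iff zero_eq_power2)

lemma cinner_eqI: "(\<And>u. cinner w u = cinner w' u) \<Longrightarrow> w = (w'::'a::complex_inner_space)"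
  by (metis cinner_diff_left cinner_self_eq_zero_iff diff_self eq_iff_diff_eq_0)

lemma cnorm_cscale: "cnorm (cscale c x) = cmod c * cnorm x"
proof -
  have "cinner (cscale c x) (cscale c x) = of_real ((cmod c)\<^sup>2) * cinner x x"
    by (simp add: cinner_cscale_left cinner_cscale_right complex_norm_square[symmetric]
        algebra_simps del: of_real_power)
  then show ?thesis
    by (simp add: cnorm_def real_sqrt_mult)
qed

lemma cnorm_minus_commute: "cnorm (x - y) = cnorm (y - x)"
  using cnorm_cscale[of "-1" "y - x"] by (simp add: cs.scale_minus_left)

lemma cnorm_sq_add: "(cnorm (x + y))\<^sup>2 = (cnorm x)\<^sup>2 + (cnorm y)\<^sup>2 + 2 * Re (cinner x y)"
proof -
  have "Re (cinner y x) = Re (cinner x y)"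
    by (subst cinner_commute) simp
  then show ?thesis
    by (simp add: power2_cnorm cinner_add_left cinner_add_right)
qed

lemma parallelogram_law:
  "(cnorm (x + y))\<^sup>2 + (cnorm (x - y))\<^sup>2 = 2 * (cnorm x)\<^sup>2 + 2 * (cnorm y)\<^sup>2"
  using cnorm_sq_add[of x y] cnorm_sq_add[of x "- y"] cnorm_cscale[of "-1" y]
  by (simp add: cs.scale_minus_left cinner_minus_right)

text \<open>Both Cauchy--Schwarz and the orthogonality of a nearest-point residual are read off
  from this identity.\<close>
lemma cnorm_sq_diff_component:
  fixes z m :: "'a::complex_inner_space"
  assumes "m \<noteq> 0"
  shows "(cnorm (z - cscale (cnj (cinner m z) / of_real ((cnorm m)\<^sup>2)) m))\<^sup>2
       = (cnorm z)\<^sup>2 - (cmod (cinner m z))\<^sup>2 / (cnorm m)\<^sup>2"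
proof -
  define c where "c = cinner m z"
  define n where "n = (cnorm m)\<^sup>2"
  have n: "n > 0" using assms by (simp add: n_def)
  have cc: "c * cnj c = of_real ((cmod c)\<^sup>2)"
    by (rule complex_norm_square[symmetric])
  have "cinner (z - cscale (cnj c / of_real n) m) (z - cscale (cnj c / of_real n) m)
      = cinner z z - c * cnj c / of_real n - cnj c * c / of_real n
        + (cnj c * c / of_real n) * (of_real n / of_real n)"
    using cinner_commute[of z m] unfolding c_def[symmetric]
    by (simp add: cinner_diff_left cinner_diff_right cinner_cscale_left cinner_cscale_right
        cinner_self_cnorm[of m, folded n_def] c_def[symmetric] algebra_simps)
  also have "\<dots> = of_real ((cnorm z)\<^sup>2 - (cmod c)\<^sup>2 / n)"
    using n by (simp add: cc mult.commute[of "cnj c"] cinner_self_cnorm)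
  finally show ?thesis
    by (simp add: power2_cnorm c_def n_def)
qed

lemma cauchy_schwarz: "cmod (cinner x y) \<le> cnorm x * cnorm y"
proof (cases "x = 0")
  case False
  have "0 \<le> (cnorm y)\<^sup>2 - (cmod (cinner x y))\<^sup>2 / (cnorm x)\<^sup>2"
    by (metis cnorm_sq_diff_component[OF False] zero_le_power2)
  then have "(cmod (cinner x y))\<^sup>2 / (cnorm x)\<^sup>2 \<le> (cnorm y)\<^sup>2"
    by simp
  then have "(cmod (cinner x y))\<^sup>2 \<le> (cnorm x * cnorm y)\<^sup>2"
    using False by (simp add: pos_divide_le_eq power_mult_distrib mult.commute)
  then show ?thesis
    by (rule power2_le_imp_le) simp
qed simp

lemma cnorm_triangle: "cnorm (x + y) \<le> cnorm x + cnorm y"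
proof -
  have "Re (cinner x y) \<le> cnorm x * cnorm y"
    using cauchy_schwarz[of x y] complex_Re_le_cmod order_trans by blast
  then have "(cnorm (x + y))\<^sup>2 \<le> (cnorm x + cnorm y)\<^sup>2"
    by (simp add: cnorm_sq_add power2_sum)
  then show ?thesis
    by (rule power2_le_imp_le) simp
qed

lemma cmod_cinner_le_sum_sq:
  assumes "cnorm (T u) \<le> K * cnorm u"
  shows "cmod (cinner (T u) w) \<le> \<bar>K\<bar> * ((cnorm u)\<^sup>2 + (cnorm w)\<^sup>2)"
proof -
  have "cmod (cinner (T u) w) \<le> cnorm (T u) * cnorm w"
    by (rule cauchy_schwarz)
  also have "\<dots> \<le> \<bar>K\<bar> * (cnorm u * cnorm w)"
    using assms abs_ge_self[of K] order_trans
    by (metis (no_types, opaque_lifting) cnorm_nonneg mult.assoc mult_right_mono)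
  also have "\<dots> \<le> \<bar>K\<bar> * ((cnorm u)\<^sup>2 + (cnorm w)\<^sup>2)"
  proof (intro mult_left_mono)
    show "cnorm u * cnorm w \<le> (cnorm u)\<^sup>2 + (cnorm w)\<^sup>2"
      using sum_squares_bound[of "cnorm u" "cnorm w"]
        mult_nonneg_nonneg[OF cnorm_nonneg cnorm_nonneg, of u w]
      unfolding power2_eq_square by linarith
  qed simp
  finally show ?thesis .
qed

lemma cscale_half_double: "cscale (1/2) (u + u) = (u::'a::complex_inner_space)"
proof -
  have "cscale (1/2) (u + u) = cscale (1/2 + 1/2) u"
    by (simp only: cs.scale_right_distrib cs.scale_left_distrib)
  then show ?thesis
    by simp
qed

lemma orthogonal_if_minimal_cnorm:
  assumes "\<And>t. cnorm z \<le> cnorm (z - cscale t m)"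
  shows "cinner m z = 0"
proof (cases "m = 0")
  case False
  have "(cnorm z)\<^sup>2 \<le> (cnorm z)\<^sup>2 - (cmod (cinner m z))\<^sup>2 / (cnorm m)\<^sup>2"
    by (metis assms cnorm_sq_diff_component[OF False] cnorm_nonneg power_mono)
  then show ?thesis
    using False by (simp add: divide_le_0_iff)
qed simp

lemma cnorm_convergent_if_cauchy_bound:
  fixes X :: "nat \<Rightarrow> 'a::chilbert"
  assumes \<epsilon>: "\<epsilon> \<longlonglongrightarrow> 0" and bound: "\<And>m n. (cnorm (X m - X n))\<^sup>2 \<le> \<epsilon> m + \<epsilon> n"
  obtains L where "(\<lambda>n. cnorm (X n - L)) \<longlonglongrightarrow> 0"
proof -
  have cauchy: "\<exists>N. \<forall>m\<ge>N. \<forall>n\<ge>N. cnorm (X m - X n) < e" if e: "e > 0" for e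
  proof -
    have "eventually (\<lambda>n. \<epsilon> n < e\<^sup>2 / 2) sequentially"
      using e by (intro order_tendstoD(2)[OF \<epsilon>]) simp
    then obtain N where N: "\<And>n. n \<ge> N \<Longrightarrow> \<epsilon> n < e\<^sup>2 / 2"
      unfolding eventually_sequentially by blast
    have "cnorm (X m - X n) < e" if "m \<ge> N" "n \<ge> N" for m n
    proof (rule power2_less_imp_less)
      show "(cnorm (X m - X n))\<^sup>2 < e\<^sup>2"
        using bound[of m n] N[OF that(1)] N[OF that(2)] by linarith
    qed (use e in simp)
    then show ?thesis by blast
  qed
  obtain L where "\<forall>e>0. \<exists>N. \<forall>n\<ge>N. cnorm (X n - L) < e"
    using chilbert_complete[of X] cauchy unfolding cnorm_def by blast
  then have "(\<lambda>n. cnorm (X n - L)) \<longlonglongrightarrow> 0"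
    unfolding LIMSEQ_iff by simp
  then show ?thesis
    by (rule that)
qed

lemma minimizing_pair_close:
  assumes "d \<le> cnorm (x - cscale (1/2) (a + b))" "0 \<le> d"
    and "(cnorm (x - a))\<^sup>2 \<le> d\<^sup>2 + e" "(cnorm (x - b))\<^sup>2 \<le> d\<^sup>2 + e'"
  shows "(cnorm (a - b))\<^sup>2 \<le> 2 * e + 2 * e'"
proof -
  have "(x - a) + (x - b) = cscale 2 (x - cscale (1/2) (a + b))"
    by (simp add: algebra_simps cs.scale_right_diff_distrib cs.scale_left_distrib[of 1 1, simplified])
  then have "cnorm ((x - a) + (x - b)) = 2 * cnorm (x - cscale (1/2) (a + b))"
    by (simp add: cnorm_cscale)
  then have "4 * d\<^sup>2 \<le> (cnorm ((x - a) + (x - b)))\<^sup>2"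
    using assms(1,2) by (simp add: power_mult_distrib power_mono)
  moreover have "(cnorm ((x - a) - (x - b)))\<^sup>2 = (cnorm (a - b))\<^sup>2"
    by (simp add: cnorm_minus_commute)
  ultimately show ?thesis
    using parallelogram_law[of "x - a" "x - b"] assms(3,4) by linarith
qed

section \<open>Riesz representation and adjoints\<close>

lemma distance_minimizing_sequence:
  fixes x :: "'a::complex_inner_space"
  assumes "S \<noteq> {}"
  shows "\<exists>d ms. 0 \<le> d \<and> (\<forall>m\<in>S. d \<le> cnorm (x - m))
    \<and> (\<forall>k. ms k \<in> S \<and> cnorm (x - ms k) < d + inverse (real (Suc k)))"
proof -
  define D where "D = (\<lambda>m. cnorm (x - m)) ` S"
  have D: "D \<noteq> {}" "bdd_below D"
    using assms by (auto simp: D_def intro!: bdd_belowI[of _ 0])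
  have "\<exists>m\<in>S. cnorm (x - m) < Inf D + inverse (real (Suc k))" for k
  proof -
    have "Inf D < Inf D + inverse (real (Suc k))" by simp
    then obtain v where "v \<in> D" "v < Inf D + inverse (real (Suc k))"
      using cInf_lessD[OF D(1)] by blast
    then show ?thesis by (auto simp: D_def)
  qed
  then obtain ms where "\<And>k. ms k \<in> S" "\<And>k. cnorm (x - ms k) < Inf D + inverse (real (Suc k))"
    by metis
  moreover have "0 \<le> Inf D"
    using D by (intro cInf_greatest) (auto simp: D_def)
  moreover have "Inf D \<le> cnorm (x - m)" if "m \<in> S" for m
    using D that by (intro cInf_lower) (auto simp: D_def)
  ultimately show ?thesis
    by blast
qed

lemma minimizing_sequence_convergent:
  fixes x :: "'a::chilbert"
  assumes midpoint: "\<And>m m'. m \<in> Z \<Longrightarrow> m' \<in> Z \<Longrightarrow> cscale (1/2) (m + m') \<in> Z"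
    and d0: "0 \<le> d" and d_le: "\<And>m. m \<in> Z \<Longrightarrow> d \<le> cnorm (x - m)"
    and ms: "\<And>k. ms k \<in> Z" "\<And>k. cnorm (x - ms k) < d + \<delta> k" and \<delta>: "\<delta> \<longlonglongrightarrow> 0"
  obtains L where "(\<lambda>n. cnorm (ms n - L)) \<longlonglongrightarrow> 0" "cnorm (x - L) \<le> d"
proof -
  define \<epsilon> where "\<epsilon> = (\<lambda>k. 2 * ((d + \<delta> k)\<^sup>2 - d\<^sup>2))"
  have close: "(cnorm (ms k - ms l))\<^sup>2 \<le> \<epsilon> k + \<epsilon> l" for k l
  proof -
    have sq: "(cnorm (x - ms j))\<^sup>2 \<le> d\<^sup>2 + ((d + \<delta> j)\<^sup>2 - d\<^sup>2)" for j
      using ms(2)[of j] power_mono[of "cnorm (x - ms j)" "d + \<delta> j" 2] by simp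
    have "d \<le> cnorm (x - cscale (1/2) (ms k + ms l))"
      using ms(1) by (intro d_le midpoint)
    from minimizing_pair_close[OF this d0 sq sq] show ?thesis
      unfolding \<epsilon>_def by simp
  qed
  have "\<epsilon> \<longlonglongrightarrow> 2 * ((d + 0)\<^sup>2 - d\<^sup>2)"
    unfolding \<epsilon>_def by (intro tendsto_intros \<delta>)
  then have "\<epsilon> \<longlonglongrightarrow> 0" by simp
  then obtain L where L: "(\<lambda>n. cnorm (ms n - L)) \<longlonglongrightarrow> 0"
    using cnorm_convergent_if_cauchy_bound close by blast
  have "cnorm (x - L) \<le> d + \<delta> n + cnorm (ms n - L)" for n
    using cnorm_triangle[of "x - ms n" "ms n - L"] ms(2)[of n] by simp
  then have "cnorm (x - L) \<le> d + 0 + 0"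
    by (intro LIMSEQ_le_const[of "\<lambda>n. d + \<delta> n + cnorm (ms n - L)"] tendsto_intros \<delta> L) blast
  then show ?thesis
    using that L by simp
qed

lemma kernel_nearest_point:
  fixes f :: "'a::chilbert \<Rightarrow> complex"
  assumes add: "\<And>x y. f (x + y) = f x + f y"
    and hom: "\<And>c x. f (cscale c x) = c * f x"
    and bnd: "\<And>x. cmod (f x) \<le> K * cnorm x"
  obtains L where "f L = 0" "\<And>m. f m = 0 \<Longrightarrow> cnorm (x - L) \<le> cnorm (x - m)"
proof -
  interpret f: additive f by standard (rule add)
  have "{m. f m = 0} \<noteq> {}"
    using f.zero by blast
  then obtain d ms where dms: "0 \<le> d \<and> (\<forall>m\<in>{m. f m = 0}. d \<le> cnorm (x - m))
      \<and> (\<forall>k. ms k \<in> {m. f m = 0} \<and> cnorm (x - ms k) < d + inverse (real (Suc k)))"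
    by (metis distance_minimizing_sequence)
  obtain L where L: "(\<lambda>n. cnorm (ms n - L)) \<longlonglongrightarrow> 0" and near: "cnorm (x - L) \<le> d"
  proof (rule minimizing_sequence_convergent[of "{m. f m = 0}" d x ms "\<lambda>k. inverse (real (Suc k))"])
    show "\<And>m m'. m \<in> {m. f m = 0} \<Longrightarrow> m' \<in> {m. f m = 0} \<Longrightarrow> cscale (1/2) (m + m') \<in> {m. f m = 0}"
      by (simp add: add hom)
  qed (use dms LIMSEQ_inverse_real_of_nat in auto)
  have "cmod (f L) \<le> K * 0"
  proof (rule LIMSEQ_le_const)
    show "(\<lambda>n. K * cnorm (ms n - L)) \<longlonglongrightarrow> K * 0"
      by (intro tendsto_intros L)
    have "f L = f (L - ms n)" for n
      using dms by (simp add: f.diff)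
    then have "cmod (f L) \<le> K * cnorm (ms n - L)" for n
      using bnd[of "L - ms n"] by (simp add: cnorm_minus_commute)
    then show "\<exists>N. \<forall>n\<ge>N. cmod (f L) \<le> K * cnorm (ms n - L)"
      by blast
  qed
  then have "f L = 0" by simp
  moreover have "cnorm (x - L) \<le> cnorm (x - m)" if "f m = 0" for m
    using near dms that by force
  ultimately show ?thesis
    by (rule that)
qed

theorem riesz_representation:
  fixes f :: "'a::chilbert \<Rightarrow> complex"
  assumes add: "\<And>x y. f (x + y) = f x + f y"
    and hom: "\<And>c x. f (cscale c x) = c * f x"
    and bnd: "\<And>x. cmod (f x) \<le> K * cnorm x"
  obtains z where "\<And>x. f x = cinner x z"
proof (cases "\<forall>x. f x = 0")
  case True
  then show ?thesis
    using that[of 0] by simp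
next
  case False
  interpret f: additive f by standard (rule add)
  obtain x0 where fx0: "f x0 \<noteq> 0" using False by blast
  obtain L where L: "f L = 0" "\<And>m. f m = 0 \<Longrightarrow> cnorm (x0 - L) \<le> cnorm (x0 - m)"
    using kernel_nearest_point[OF add hom bnd] by blast
  define z where "z = x0 - L"
  have orth: "cinner m z = 0" if "f m = 0" for m
  proof (rule orthogonal_if_minimal_cnorm)
    fix t
    have "f (L + cscale t m) = 0"
      using L(1) that by (simp add: add hom)
    moreover have "x0 - (L + cscale t m) = z - cscale t m"
      by (simp add: z_def)
    ultimately show "cnorm z \<le> cnorm (z - cscale t m)"
      using L(2) z_def by metis
  qed
  have "f z = f x0" using L(1) by (simp add: z_def f.diff)
  then have zz: "cinner z z \<noteq> 0"
    using fx0 f.zero by auto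
  have "f x = cinner x (cscale (cnj (f z / cinner z z)) z)" for x
  proof -
    have "cinner (cscale (f x) z - cscale (f z) x) z = 0"
      by (rule orth) (simp add: f.diff hom)
    then have "f x * cinner z z = f z * cinner x z"
      by (simp add: cinner_diff_left cinner_cscale_left)
    then have "f x = f z * cinner x z / cinner z z"
      using zz by (simp add: eq_divide_eq)
    then show ?thesis
      by (simp add: cinner_cscale_right)
  qed
  then show ?thesis using that by blast
qed

lemma adj_eqI:
  fixes T S :: "('h::chilbert) op"
  assumes "\<And>x y. cinner (T x) y = cinner x (S y)"
  shows "adj T = S"
proof -
  have "S' = S" if "\<forall>x y. cinner (T x) y = cinner x (S' y)" for S'
  proof
    fix y
    show "S' y = S y"
      using that assms by (intro cinner_eqI) (metis cinner_commute)
  qed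
  then show ?thesis
    unfolding adj_def using assms by (intro the_equality) auto
qed

lemma bop_add: "T \<in> bop \<Longrightarrow> T (x + y) = T x + T y"
  by (simp add: bop_def)

lemma bop_scale: "T \<in> bop \<Longrightarrow> T (cscale c x) = cscale c (T x)"
  by (simp add: bop_def)

lemma bop_additive: "T \<in> bop \<Longrightarrow> Modules.additive T"
  by (simp add: Modules.additive_def bop_add)

lemma bop_zero: "T \<in> bop \<Longrightarrow> T 0 = 0"
  using Modules.additive.zero bop_additive by blast

lemma bop_diff: "T \<in> bop \<Longrightarrow> T (x - y) = T x - T y"
  using Modules.additive.diff bop_additive by blast

lemma bop_sum: "T \<in> bop \<Longrightarrow> T (sum f A) = (\<Sum>i\<in>A. T (f i))"
  using Modules.additive.sum bop_additive by blast

lemma bop_has_adjoint: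
  assumes "T \<in> bop"
  shows "\<exists>S. \<forall>x y. cinner (T x) y = cinner x (S y)"
proof -
  from assms obtain K where bnd: "\<And>x. cnorm (T x) \<le> K * cnorm x"
    unfolding bop_def by blast
  have "\<exists>z. \<forall>x. cinner (T x) y = cinner x z" for y
  proof -
    have "cmod (cinner (T x) y) \<le> (K * cnorm y) * cnorm x" for x
    proof -
      have "cmod (cinner (T x) y) \<le> cnorm (T x) * cnorm y" by (rule cauchy_schwarz)
      also have "\<dots> \<le> K * cnorm x * cnorm y" using bnd by (intro mult_right_mono) auto
      finally show ?thesis by (simp add: algebra_simps)
    qed
    then obtain z where "\<And>x. cinner (T x) y = cinner x z"
      using riesz_representation[of "\<lambda>x. cinner (T x) y"] assms
      by (metis bop_add bop_scale cinner_add_left cinner_cscale_left)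
    then show ?thesis by blast
  qed
  then show ?thesis by metis
qed

lemma cinner_adj_right: "T \<in> bop \<Longrightarrow> cinner (T x) y = cinner x (adj T y)"
  by (metis adj_eqI bop_has_adjoint)

lemma cinner_adj_left: "T \<in> bop \<Longrightarrow> cinner x (T y) = cinner (adj T x) y"
  by (metis cinner_adj_right cinner_commute)

lemma adj_adj: "T \<in> bop \<Longrightarrow> adj (adj T) = T"
  by (rule adj_eqI) (simp add: cinner_adj_left)

lemma adj_zop: "adj zop = zop"
  by (rule adj_eqI) (simp add: zop_def)

lemma sesquilinear_zero_if_diag_zero:
  fixes B :: "'x \<Rightarrow> 'x \<Rightarrow> complex"
  assumes diag: "\<And>a. B a a = 0"
    and plus: "\<And>a b. B (pl a b) (pl a b) = B a a + B a b + B b a + B b b"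
    and rot_left: "\<And>a b. B (rot a) b = \<i> * B a b"
    and rot_right: "\<And>a b. B b (rot a) = - \<i> * B b a"
  shows "B a b = 0"
proof -
  have sym: "B a b + B b a = 0" for a b
    using plus[of a b] diag[of a] diag[of b] diag[of "pl a b"] by simp
  have "\<i> * (B a b - B b a) = 0"
    using sym[of "rot a" b] by (simp add: rot_left rot_right algebra_simps)
  then show ?thesis
    using sym[of a b] by simp
qed

lemma operator_matrix_zero_if_form_zero:
  fixes F :: "nat \<Rightarrow> nat \<Rightarrow> ('h::chilbert) op"
  assumes add: "\<And>r s x y. r < N \<Longrightarrow> s < N \<Longrightarrow> F r s (x + y) = F r s x + F r s y"
    and scale: "\<And>r s c x. r < N \<Longrightarrow> s < N \<Longrightarrow> F r s (cscale c x) = cscale c (F r s x)"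
    and zero: "\<And>\<xi>. (\<Sum>r<N. \<Sum>s<N. cinner (F r s (\<xi> s)) (\<xi> r)) = 0"
    and rs: "r0 < N" "s0 < N"
  shows "F r0 s0 v = 0"
proof -
  define B where "B = (\<lambda>\<xi> \<zeta>. \<Sum>r<N. \<Sum>s<N. cinner (F r s (\<xi> s)) (\<zeta> r))"
  have B0: "B \<xi> \<zeta> = 0" for \<xi> \<zeta>
  proof (rule sesquilinear_zero_if_diag_zero[where B = B and a = \<xi> and b = \<zeta>
        and pl = "\<lambda>\<xi> \<zeta> t. \<xi> t + \<zeta> t" and rot = "\<lambda>\<xi> t. cscale \<i> (\<xi> t)"])
    show "B a a = 0" for a
      using zero by (simp add: B_def)
    show "B (\<lambda>t. a t + b t) (\<lambda>t. a t + b t) = B a a + B a b + B b a + B b b" for a b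
      by (simp add: B_def add cinner_add_left cinner_add_right sum.distrib algebra_simps)
    show "B (\<lambda>t. cscale \<i> (a t)) b = \<i> * B a b" for a b
      by (simp add: B_def scale cinner_cscale_left sum_distrib_left)
    show "B b (\<lambda>t. cscale \<i> (a t)) = - \<i> * B b a" for a b
      by (simp add: B_def cinner_cscale_right sum_distrib_left)
  qed
  have F0: "F r s 0 = 0" if "r < N" "s < N" for r s
    using add[OF that, of 0 0] by simp
  have "B (\<lambda>t. if t = s0 then v else 0) (\<lambda>t. if t = r0 then F r0 s0 v else 0)
      = cinner (F r0 s0 v) (F r0 s0 v)"
  proof -
    have "cinner (if s = s0 then F r s0 v else 0) (if r = r0 then F r0 s0 v else 0)
        = (if s = s0 then if r = r0 then cinner (F r0 s0 v) (F r0 s0 v) else 0 else 0)" for r s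
      by simp
    then show ?thesis
      using rs by (simp add: B_def F0 if_distrib[of "F _ _"] cong: if_cong)
  qed
  then show ?thesis
    using B0 by simp
qed

section \<open>Compressions by \<open>p\<^sub>n \<oplus> q\<^sub>n\<close>\<close>

definition pq_diag_entry :: "('h::chilbert) op \<Rightarrow> nat \<Rightarrow> nat \<Rightarrow> 'h op" where
  "pq_diag_entry p n r = (if r < n then p else (\<lambda>x. x - p x))"

lemma pq_diag_eq:
  "pq_diag n p = (\<lambda>i j. if i < 2*n \<and> j < 2*n \<and> i = j then pq_diag_entry p n i else zop)"
  by (simp add: pq_diag_def pq_diag_entry_def fun_eq_iff)

definition compression_form ::
    "nat \<Rightarrow> (nat \<Rightarrow> ('h::chilbert) op) \<Rightarrow> 'h opmat \<Rightarrow> (nat \<Rightarrow> 'h) \<Rightarrow> complex" where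
  "compression_form N P x \<xi> = (\<Sum>r<N. \<Sum>s<N. cinner (P r (x r s (P s (\<xi> s)))) (\<xi> r))"

lemma sum_lessThan_2n: "(\<Sum>r<2*n. g r) = (\<Sum>a<2. \<Sum>i<n. g (a*n + i))" for n :: nat
  using sum_mult_product[of g 2 n] by (simp add: add.commute)

lemma block_index_bounds: "r < 2*n \<Longrightarrow> r mod n < n \<and> r div (n::nat) < 2"
  by (cases "n = 0") (auto simp: less_mult_imp_div_less mult.commute)

lemma block_index_less: "i < n \<Longrightarrow> a < 2 \<Longrightarrow> a*n + i < 2*(n::nat)"
  by (cases "a = 0") (auto simp: less_2_cases_iff)

lemma block_index_div: "i < n \<Longrightarrow> (a*n + i) div n = (a::nat)"
  by simp

lemma sum_swap4:
  "(\<Sum>k\<in>A. \<Sum>l\<in>B. \<Sum>i\<in>C. \<Sum>j\<in>D. F k l i j) = (\<Sum>i\<in>C. \<Sum>j\<in>D. \<Sum>k\<in>A. \<Sum>l\<in>B. F k l i j)"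
proof -
  have "(\<Sum>k\<in>A. \<Sum>l\<in>B. \<Sum>i\<in>C. \<Sum>j\<in>D. F k l i j) = (\<Sum>k\<in>A. \<Sum>i\<in>C. \<Sum>l\<in>B. \<Sum>j\<in>D. F k l i j)"
    by (rule sum.cong[OF refl], rule sum.swap)
  also have "\<dots> = (\<Sum>i\<in>C. \<Sum>k\<in>A. \<Sum>l\<in>B. \<Sum>j\<in>D. F k l i j)" by (rule sum.swap)
  also have "\<dots> = (\<Sum>i\<in>C. \<Sum>k\<in>A. \<Sum>j\<in>D. \<Sum>l\<in>B. F k l i j)"
    by (rule sum.cong[OF refl], rule sum.cong[OF refl], rule sum.swap)
  also have "\<dots> = (\<Sum>i\<in>C. \<Sum>j\<in>D. \<Sum>k\<in>A. \<Sum>l\<in>B. F k l i j)"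
    by (rule sum.cong[OF refl], rule sum.swap)
  finally show ?thesis .
qed

locale proj_quotient =
  fixes V :: "('h::chilbert) op set" and p :: "'h op"
  assumes opsys: "concrete_opsys V" and p_in_V: "p \<in> V" and proj: "is_projection p"
begin

lemma V_bop: "T \<in> V \<Longrightarrow> T \<in> bop"
  using opsys by (auto simp: concrete_opsys_def)

lemma id_in_V: "id \<in> V"
  using opsys by (auto simp: concrete_opsys_def)

lemma opadd_in_V: "S \<in> V \<Longrightarrow> T \<in> V \<Longrightarrow> opadd S T \<in> V"
  using opsys by (auto simp: concrete_opsys_def)

lemma opscale_in_V: "T \<in> V \<Longrightarrow> opscale c T \<in> V"
  using opsys by (auto simp: concrete_opsys_def)

lemma adj_in_V: "T \<in> V \<Longrightarrow> adj T \<in> V"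
  using opsys by (auto simp: concrete_opsys_def)

lemma zop_in_V: "zop \<in> V"
proof -
  have "zop = opscale 0 id"
    by (rule ext) (simp add: zop_def opscale_def)
  then show ?thesis
    using opscale_in_V[OF id_in_V, of 0] by metis
qed

lemma V_add: "T \<in> V \<Longrightarrow> T (x + y) = T x + T y"
  using V_bop bop_add by blast

lemma V_scale: "T \<in> V \<Longrightarrow> T (cscale c x) = cscale c (T x)"
  using V_bop bop_scale by blast

lemma V_zero: "T \<in> V \<Longrightarrow> T 0 = 0"
  using V_bop bop_zero by blast

lemma V_diff: "T \<in> V \<Longrightarrow> T (x - y) = T x - T y"
  using V_bop bop_diff by blast

lemma V_sum: "T \<in> V \<Longrightarrow> T (sum f A) = (\<Sum>i\<in>A. T (f i))"
  using V_bop bop_sum by blast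

lemma V_cinner_adj_right: "T \<in> V \<Longrightarrow> cinner (T x) y = cinner x (adj T y)"
  using V_bop cinner_adj_right by blast

lemma V_cinner_adj_left: "T \<in> V \<Longrightarrow> cinner x (T y) = cinner (adj T x) y"
  using V_bop cinner_adj_left by blast

lemma V_adj_adj: "T \<in> V \<Longrightarrow> adj (adj T) = T"
  using V_bop adj_adj by blast

lemma adj_opadd: "S \<in> V \<Longrightarrow> T \<in> V \<Longrightarrow> adj (opadd S T) = opadd (adj S) (adj T)"
  by (rule adj_eqI) (simp add: opadd_def cinner_add_left cinner_add_right V_cinner_adj_right)

lemma adj_opscale: "T \<in> V \<Longrightarrow> adj (opscale c T) = opscale (cnj c) (adj T)"
  by (rule adj_eqI) (simp add: opscale_def cinner_cscale_left cinner_cscale_right V_cinner_adj_right)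

lemma sum_in_V:
  assumes "finite A" "\<And>i. i \<in> A \<Longrightarrow> f i \<in> V"
  shows "(\<lambda>v. \<Sum>i\<in>A. f i v) \<in> V"
  using assms
proof (induction A rule: finite_induct)
  case empty
  then show ?case using zop_in_V by (simp add: zop_def)
next
  case (insert x F)
  have "(\<lambda>v. \<Sum>i\<in>insert x F. f i v) = opadd (f x) (\<lambda>v. \<Sum>i\<in>F. f i v)"
    using insert by (simp add: opadd_def)
  then show ?case using insert opadd_in_V by simp
qed

lemma p_selfadj: "cinner (p x) y = cinner x (p y)"
  using V_cinner_adj_right[OF p_in_V] proj by (simp add: is_projection_def)

lemma p_idem: "p (p x) = p x"
  using proj unfolding is_projection_def by (metis comp_apply)

lemma q_in_V: "(\<lambda>x. x - p x) \<in> V"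
proof -
  have "(\<lambda>x. x - p x) = opadd id (opscale (-1) p)"
    by (rule ext) (simp add: opadd_def opscale_def)
  then show ?thesis using opadd_in_V opscale_in_V id_in_V p_in_V by simp
qed

lemma pq_entry_in_V: "pq_diag_entry p n r \<in> V"
  using p_in_V q_in_V by (simp add: pq_diag_entry_def)

lemma pq_entry_selfadj: "cinner (pq_diag_entry p n r x) y = cinner x (pq_diag_entry p n r y)"
  by (simp add: pq_diag_entry_def p_selfadj cinner_diff_left cinner_diff_right)

lemma pq_entry_idem: "pq_diag_entry p n r (pq_diag_entry p n r x) = pq_diag_entry p n r x"
  using V_diff[OF p_in_V] by (simp add: pq_diag_entry_def p_idem)

lemma pq_entry_adj: "adj (pq_diag_entry p n r) = pq_diag_entry p n r"
  by (rule adj_eqI) (simp add: pq_entry_selfadj)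

lemma pq_entry_add: "pq_diag_entry p n r (x + y) = pq_diag_entry p n r x + pq_diag_entry p n r y"
  using V_add[OF pq_entry_in_V] .

lemma pq_entry_scale: "pq_diag_entry p n r (cscale c x) = cscale c (pq_diag_entry p n r x)"
  using V_scale[OF pq_entry_in_V] .

lemma pq_entry_zero: "pq_diag_entry p n r 0 = 0"
  using V_zero[OF pq_entry_in_V] .

lemma opmats_entry: "x \<in> opmats N V \<Longrightarrow> i < N \<Longrightarrow> j < N \<Longrightarrow> x i j \<in> V"
  by (simp add: opmats_def)

lemma opmats_entry_in_V: "x \<in> opmats N V \<Longrightarrow> x i j \<in> V"
  by (cases "i < N \<and> j < N") (auto simp: opmats_def zop_in_V)

lemma opmats_zero: "(\<lambda>i j. zop) \<in> opmats N V"
  using zop_in_V by (simp add: opmats_def)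

lemma opmats_add: "x \<in> opmats N V \<Longrightarrow> y \<in> opmats N V \<Longrightarrow> opmat_add N x y \<in> opmats N V"
  by (simp add: opmats_def opmat_add_def opadd_in_V)

lemma opmats_scale: "x \<in> opmats N V \<Longrightarrow> opmat_scale N c x \<in> opmats N V"
  by (simp add: opmats_def opmat_scale_def opscale_in_V)

lemma opmats_star: "x \<in> opmats N V \<Longrightarrow> opmat_star N x \<in> opmats N V"
  by (simp add: opmats_def opmat_star_def adj_in_V)

lemma opmats_eqI:
  assumes "x \<in> opmats N V" "y \<in> opmats N V"
    and "\<And>i j v. i < N \<Longrightarrow> j < N \<Longrightarrow> x i j v = y i j v"
  shows "x = y"
proof (intro ext)
  fix i j v
  show "x i j v = y i j v"
    using assms by (cases "i < N \<and> j < N") (auto simp: opmats_def)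
qed

lemma opmat_add_apply: "i < N \<Longrightarrow> j < N \<Longrightarrow> opmat_add N x y i j v = x i j v + y i j v"
  by (simp add: opmat_add_def opadd_def)

lemma opmat_scale_apply: "i < N \<Longrightarrow> j < N \<Longrightarrow> opmat_scale N c x i j v = cscale c (x i j v)"
  by (simp add: opmat_scale_def opscale_def)

lemma opmat_star_apply: "i < N \<Longrightarrow> j < N \<Longrightarrow> opmat_star N x i j = adj (x j i)"
  by (simp add: opmat_star_def)

lemma opadd_commute: "opadd S T = opadd T S"
  by (rule ext) (simp add: opadd_def add.commute)

lemma opmat_add_commute: "opmat_add N x y = opmat_add N y x"
  by (intro ext) (simp add: opmat_add_def opadd_def add.commute)

lemma opmat_add_assoc: "opmat_add N (opmat_add N x y) z = opmat_add N x (opmat_add N y z)"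
  by (intro ext) (simp add: opmat_add_def opadd_def add.assoc)

lemma opmat_star_add:
  "x \<in> opmats N V \<Longrightarrow> y \<in> opmats N V \<Longrightarrow>
    opmat_star N (opmat_add N x y) = opmat_add N (opmat_star N x) (opmat_star N y)"
  by (intro ext) (simp add: opmat_star_def opmat_add_def adj_opadd opmats_entry adj_zop)

lemma opmat_star_scale:
  "x \<in> opmats N V \<Longrightarrow> opmat_star N (opmat_scale N c x) = opmat_scale N (cnj c) (opmat_star N x)"
  by (intro ext) (simp add: opmat_star_def opmat_scale_def adj_opscale opmats_entry adj_zop)

lemma opmat_star_star:
  assumes "x \<in> opmats N V"
  shows "opmat_star N (opmat_star N x) = x"
  by (rule opmats_eqI[OF opmats_star[OF opmats_star[OF assms]] assms])
    (simp add: opmat_star_apply V_adj_adj opmats_entry[OF assms])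

lemma pq_diag_compression:
  assumes x: "x \<in> opmats (2*n) V" and r: "r < 2*n" and s: "s < 2*n"
  shows "opmat_mult (2*n) (pq_diag n p) (opmat_mult (2*n) x (pq_diag n p)) r s
       = pq_diag_entry p n r \<circ> x r s \<circ> pq_diag_entry p n s"
proof -
  have right: "opmat_mult (2*n) x (pq_diag n p) i s = x i s \<circ> pq_diag_entry p n s"
    if i: "i < 2*n" for i
  proof
    fix w
    have "opmat_mult (2*n) x (pq_diag n p) i s w = (\<Sum>j<2*n. x i j (pq_diag n p j s w))"
      using i s by (simp add: opmat_mult_def)
    also have "\<dots> = (\<Sum>j<2*n. if j = s then x i s (pq_diag_entry p n s w) else 0)"
      using i s by (intro sum.cong refl) (auto simp: pq_diag_eq zop_def V_zero[OF opmats_entry[OF x]])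
    finally show "opmat_mult (2*n) x (pq_diag n p) i s w = (x i s \<circ> pq_diag_entry p n s) w"
      using s by simp
  qed
  show ?thesis
  proof
    fix v
    have "opmat_mult (2*n) (pq_diag n p) (opmat_mult (2*n) x (pq_diag n p)) r s v
        = (\<Sum>j<2*n. pq_diag n p r j (opmat_mult (2*n) x (pq_diag n p) j s v))"
      using r s by (simp add: opmat_mult_def)
    also have "\<dots> = (\<Sum>j<2*n. if j = r then pq_diag_entry p n r (x r s (pq_diag_entry p n s v)) else 0)"
      using r right[OF r] by (intro sum.cong refl) (auto simp: pq_diag_eq zop_def)
    finally show "opmat_mult (2*n) (pq_diag n p) (opmat_mult (2*n) x (pq_diag n p)) r s v
        = (pq_diag_entry p n r \<circ> x r s \<circ> pq_diag_entry p n s) v"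
      using r by simp
  qed
qed

lemma Ccone_iff_compression_form:
  "x \<in> Ccone V p n \<longleftrightarrow> x \<in> opmats (2*n) V \<and> x = opmat_star (2*n) x \<and>
      (\<forall>\<xi>. Im (compression_form (2*n) (pq_diag_entry p n) x \<xi>) = 0
          \<and> 0 \<le> Re (compression_form (2*n) (pq_diag_entry p n) x \<xi>))"
proof -
  have "(\<Sum>i<2*n. cinner (\<Sum>j<2*n.
        opmat_mult (2*n) (pq_diag n p) (opmat_mult (2*n) x (pq_diag n p)) i j (\<xi> j)) (\<xi> i))
      = compression_form (2*n) (pq_diag_entry p n) x \<xi>" if "x \<in> opmats (2*n) V" for \<xi>
    unfolding compression_form_def cinner_sum_left
    by (intro sum.cong refl) (simp add: pq_diag_compression[OF that])
  then have "opmat_pos (2*n) (opmat_mult (2*n) (pq_diag n p) (opmat_mult (2*n) x (pq_diag n p)))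
      \<longleftrightarrow> (\<forall>\<xi>. Im (compression_form (2*n) (pq_diag_entry p n) x \<xi>) = 0
          \<and> 0 \<le> Re (compression_form (2*n) (pq_diag_entry p n) x \<xi>))" if "x \<in> opmats (2*n) V"
    unfolding opmat_pos_def Let_def using that by presburger
  then show ?thesis
    unfolding Ccone_def by blast
qed

lemma compression_form_add:
  assumes "x \<in> opmats N V" "y \<in> opmats N V" "\<And>r. P r \<in> V"
  shows "compression_form N P (opmat_add N x y) \<xi>
    = compression_form N P x \<xi> + compression_form N P y \<xi>"
  unfolding compression_form_def
  by (simp add: opmat_add_apply V_add assms cinner_add_left sum.distrib)

lemma compression_form_scale:
  assumes "x \<in> opmats N V" "\<And>r. P r \<in> V"
  shows "compression_form N P (opmat_scale N c x) \<xi> = c * compression_form N P x \<xi>"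
  unfolding compression_form_def
  by (simp add: opmat_scale_apply V_scale assms cinner_cscale_left sum_distrib_left)

lemma compression_form_cong:
  assumes "\<And>r s v. r < N \<Longrightarrow> s < N \<Longrightarrow> P r (x r s (P s v)) = P r (y r s (P s v))"
  shows "compression_form N P x \<xi> = compression_form N P y \<xi>"
  unfolding compression_form_def using assms by (intro sum.cong refl) auto

lemma compression_form_zero_entries:
  assumes x: "x \<in> opmats N V" and P: "\<And>r. P r \<in> V"
    and zero: "\<And>\<xi>. compression_form N P x \<xi> = 0" and rs: "r < N" "s < N"
  shows "P r (x r s (P s v)) = 0"
proof (rule operator_matrix_zero_if_form_zero[where F = "\<lambda>r s v. P r (x r s (P s v))", OF _ _ _ rs])
  show "P r (x r s (P s (a + b))) = P r (x r s (P s a)) + P r (x r s (P s b))"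
    if "r < N" "s < N" for r s a b
    using that by (simp add: V_add P opmats_entry[OF x])
  show "P r (x r s (P s (cscale c a))) = cscale c (P r (x r s (P s a)))"
    if "r < N" "s < N" for r s c a
    using that by (simp add: V_scale P opmats_entry[OF x])
  show "(\<Sum>r<N. \<Sum>s<N. cinner (P r (x r s (P s (\<xi> s)))) (\<xi> r)) = 0" for \<xi>
    using zero[of \<xi>] unfolding compression_form_def .
qed

lemma compression_form_real:
  assumes x: "x \<in> opmats N V" and herm: "x = opmat_star N x"
    and P: "\<And>r. P r \<in> V" and P_selfadj: "\<And>r a b. cinner (P r a) b = cinner a (P r b)"
  shows "Im (compression_form N P x \<xi>) = 0"
proof -
  have "cinner (\<xi> r) (P r (x r s (P s (\<xi> s)))) = cinner (P s (x s r (P r (\<xi> r)))) (\<xi> s)"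
    if "r < N" "s < N" for r s
  proof -
    have "cinner (\<xi> r) (P r (x r s (P s (\<xi> s)))) = cinner (adj (x r s) (P r (\<xi> r))) (P s (\<xi> s))"
      using that by (simp add: P_selfadj[symmetric] V_cinner_adj_left opmats_entry[OF x])
    also have "adj (x r s) = x s r"
      using that fun_cong[OF fun_cong[OF herm, of s], of r] by (simp add: opmat_star_apply)
    finally show ?thesis
      by (simp add: P_selfadj)
  qed
  then have "cnj (compression_form N P x \<xi>) = (\<Sum>r<N. \<Sum>s<N. cinner (P s (x s r (P r (\<xi> r)))) (\<xi> s))"
    unfolding compression_form_def by (simp add: cinner_commute[of "\<xi> _"])
  also have "\<dots> = compression_form N P x \<xi>"
    unfolding compression_form_def by (rule sum.swap)
  finally show ?thesis
    by (metis Reals_cnj_iff complex_is_Real_iff)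
qed

section \<open>The quotient \<open>M\<^sub>2(V)/J\<^sub>p\<^sub>\<oplus>\<^sub>q\<close>\<close>

abbreviation "M2 \<equiv> opmats 2 V"
abbreviation "J \<equiv> Jpq V p"
abbreviation "pq \<equiv> pq_diag_entry p 1"
abbreviation "cls \<equiv> coset (Jpq V p)"
abbreviation "zero2 \<equiv> (\<lambda>i j. zop) :: 'h opmat"
abbreviation "Q \<equiv> quotient_osys V p"

definition compression_kernel :: "'h opmat set" where
  "compression_kernel = {x \<in> M2. \<forall>a<2. \<forall>b<2. \<forall>v. pq a (x a b (pq b v)) = 0}"

lemma compression_kernel_add:
  "x \<in> compression_kernel \<Longrightarrow> y \<in> compression_kernel \<Longrightarrow> opmat_add 2 x y \<in> compression_kernel"
  unfolding compression_kernel_def by (auto simp: opmats_add opmat_add_apply pq_entry_add)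

lemma compression_kernel_scale:
  "x \<in> compression_kernel \<Longrightarrow> opmat_scale 2 c x \<in> compression_kernel"
  unfolding compression_kernel_def by (auto simp: opmats_scale opmat_scale_apply pq_entry_scale)

lemma compression_star:
  assumes x: "x \<in> M2" and ab: "a < 2" "b < 2"
  shows "cinner (pq a (opmat_star 2 x a b (pq b v))) u = cinner v (pq b (x b a (pq a u)))"
proof -
  have "cinner (pq a (opmat_star 2 x a b (pq b v))) u = cinner (adj (x b a) (pq b v)) (pq a u)"
    using ab by (simp add: opmat_star_apply pq_entry_selfadj)
  also have "\<dots> = cinner (pq b v) (x b a (pq a u))"
    using V_cinner_adj_left[OF opmats_entry[OF x ab(2) ab(1)], symmetric] by simp
  also have "\<dots> = cinner v (pq b (x b a (pq a u)))"
    by (simp add: pq_entry_selfadj)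
  finally show ?thesis .
qed

lemma compression_kernel_star:
  assumes x: "x \<in> compression_kernel"
  shows "opmat_star 2 x \<in> compression_kernel"
proof -
  have xm: "x \<in> M2" using x by (simp add: compression_kernel_def)
  have "pq a (opmat_star 2 x a b (pq b v)) = 0" if "a < 2" "b < 2" for a b v
  proof (rule cinner_eqI)
    fix u
    have "cinner (pq a (opmat_star 2 x a b (pq b v))) u = cinner v (pq b (x b a (pq a u)))"
      by (rule compression_star[OF xm that])
    also have "\<dots> = cinner 0 u"
      using x that by (simp add: compression_kernel_def)
    finally show "cinner (pq a (opmat_star 2 x a b (pq b v))) u = cinner 0 u" .
  qed
  then show ?thesis
    using xm unfolding compression_kernel_def by (auto simp: opmats_star)
qed

lemma hermitian_kernel_in_J:
  assumes x: "x \<in> compression_kernel" and herm: "x = opmat_star 2 x"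
  shows "x \<in> J"
proof -
  have xm: "x \<in> M2" using x by (simp add: compression_kernel_def)
  have form0: "compression_form 2 pq y \<xi> = 0" if "y \<in> compression_kernel" for y \<xi>
    using that by (simp add: compression_form_def compression_kernel_def)
  have "x \<in> Ccone V p 1"
    unfolding Ccone_iff_compression_form mult_1_right using xm herm form0[OF x] by simp
  moreover have "opmat_scale 2 (-1) x \<in> Ccone V p 1"
    unfolding Ccone_iff_compression_form mult_1_right
    using opmats_scale[OF xm] opmat_star_scale[OF xm, of "-1"] herm
      form0[OF compression_kernel_scale[OF x]]
    by simp
  ultimately show ?thesis
    unfolding Jpq_def by (intro opmat_span.span_base) simp
qed

lemma J_subset_compression_kernel: "x \<in> J \<Longrightarrow> x \<in> compression_kernel"
  unfolding Jpq_def
proof (induction rule: opmat_span.induct)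
  case span_zero
  then show ?case
    using opmats_zero by (simp add: compression_kernel_def zop_def pq_entry_zero)
next
  case (span_base x)
  then have pos: "x \<in> Ccone V p 1" and neg: "opmat_scale 2 (-1) x \<in> Ccone V p 1"
    by auto
  note pos' = pos[unfolded Ccone_iff_compression_form mult_1_right]
    and neg' = neg[unfolded Ccone_iff_compression_form mult_1_right]
  have xm: "x \<in> M2"
    using pos' by blast
  have "compression_form 2 pq x \<xi> = 0" for \<xi>
  proof -
    have "0 \<le> Re (compression_form 2 pq (opmat_scale 2 (-1) x) \<xi>)"
      using neg' by blast
    then have "Re (compression_form 2 pq x \<xi>) \<le> 0"
      using compression_form_scale[where P = pq and c = "-1", OF xm pq_entry_in_V] by simp
    moreover have "Im (compression_form 2 pq x \<xi>) = 0" "0 \<le> Re (compression_form 2 pq x \<xi>)"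
      using pos' by blast+
    ultimately show ?thesis
      by (simp add: complex_eq_iff)
  qed
  then show ?case
    using xm compression_form_zero_entries[where P = "pq_diag_entry p 1", OF xm pq_entry_in_V]
    by (simp add: compression_kernel_def)
next
  case (span_add x y)
  then show ?case by (blast intro: compression_kernel_add)
next
  case (span_scale x c)
  then show ?case by (blast intro: compression_kernel_scale)
qed

lemma opmat_cartesian_decomposition:
  assumes x: "x \<in> opmats N V"
  defines "h \<equiv> opmat_add N x (opmat_star N x)"
    and "k \<equiv> opmat_scale N \<i> (opmat_add N x (opmat_scale N (-1) (opmat_star N x)))"
  shows "x = opmat_add N (opmat_scale N (1/2) h) (opmat_scale N (-\<i>/2) k)"
    and "opmat_star N h = h" and "opmat_star N k = k"
proof -
  have xs: "opmat_star N x \<in> opmats N V"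
    using x by (rule opmats_star)
  have km: "k \<in> opmats N V"
    unfolding k_def using x xs by (intro opmats_scale opmats_add)
  show "x = opmat_add N (opmat_scale N (1/2) h) (opmat_scale N (-\<i>/2) k)"
  proof (rule opmats_eqI[OF x])
    show "opmat_add N (opmat_scale N (1/2) h) (opmat_scale N (-\<i>/2) k) \<in> opmats N V"
      unfolding h_def using x xs km by (intro opmats_add opmats_scale)
    fix i j v assume "i < N" "j < N"
    then show "x i j v = opmat_add N (opmat_scale N (1/2) h) (opmat_scale N (-\<i>/2) k) i j v"
      by (simp add: h_def k_def opmat_add_apply opmat_scale_apply cs.scale_right_distrib
          cs.scale_right_diff_distrib cscale_cscale cs.scale_left_distrib[symmetric])
  qed
  show "opmat_star N h = h"
    unfolding h_def using opmat_star_add[OF x xs] opmat_star_star[OF x] opmat_add_commute by metis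
  show "opmat_star N k = k"
  proof (rule opmats_eqI[OF opmats_star[OF km] km])
    fix i j v assume ij: "i < N" "j < N"
    have kij: "k a b = opscale \<i> (opadd (x a b) (opscale (-1) (adj (x b a))))" if "a < N" "b < N" for a b
      using that by (simp add: k_def opmat_scale_def opmat_add_def opmat_star_def)
    have "opmat_star N k i j = opscale (cnj \<i>) (opadd (adj (x j i)) (opscale (cnj (-1)) (x i j)))"
      using ij by (simp add: opmat_star_apply kij adj_opscale adj_opadd opadd_in_V opscale_in_V adj_in_V
          V_adj_adj opmats_entry[OF x])
    moreover have "cscale (cnj \<i>) (a + cscale (cnj (-1)) b) = cscale \<i> (b + cscale (-1) a)"
      for a b :: 'h
      by (simp add: cs.scale_right_distrib algebra_simps)
    ultimately show "opmat_star N k i j v = k i j v"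
      using ij by (simp only: kij opscale_def opadd_def)
  qed
qed

lemma compression_kernel_subset_J:
  assumes x: "x \<in> compression_kernel"
  shows "x \<in> J"
proof -
  have xm: "x \<in> M2" using x by (simp add: compression_kernel_def)
  define h where "h = opmat_add 2 x (opmat_star 2 x)"
  define k where "k = opmat_scale 2 \<i> (opmat_add 2 x (opmat_scale 2 (-1) (opmat_star 2 x)))"
  note dec = opmat_cartesian_decomposition[OF xm, folded h_def k_def]
  have "h \<in> J"
    unfolding h_def using x dec(2)[symmetric, unfolded h_def]
    by (intro hermitian_kernel_in_J compression_kernel_add compression_kernel_star)
  moreover have "k \<in> J"
    unfolding k_def using x dec(3)[symmetric, unfolded k_def]
    by (intro hermitian_kernel_in_J compression_kernel_add compression_kernel_scale
        compression_kernel_star)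
  ultimately show ?thesis
    unfolding Jpq_def by (subst dec(1)) (intro opmat_span.span_add opmat_span.span_scale)
qed

lemma J_eq_compression_kernel: "J = compression_kernel"
  using J_subset_compression_kernel compression_kernel_subset_J by blast

lemma coset_eq_compression_class:
  assumes x: "x \<in> M2"
  shows "cls x = {z \<in> M2. \<forall>a<2. \<forall>b<2. \<forall>v. pq a (z a b (pq b v)) = pq a (x a b (pq b v))}"
proof (intro equalityI subsetI CollectI conjI allI impI)
  fix z assume "z \<in> cls x"
  then obtain j where j: "j \<in> compression_kernel" and z: "z = opmat_add 2 x j"
    unfolding coset_def J_eq_compression_kernel by blast
  show "z \<in> M2"
    using x j z by (simp add: compression_kernel_def opmats_add)
  show "pq a (z a b (pq b v)) = pq a (x a b (pq b v))" if "a < 2" "b < 2" for a b v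
    using j that by (simp add: z opmat_add_apply pq_entry_add compression_kernel_def)
next
  fix z assume "z \<in> {z \<in> M2. \<forall>a<2. \<forall>b<2. \<forall>v. pq a (z a b (pq b v)) = pq a (x a b (pq b v))}"
  then have zm: "z \<in> M2"
    and same: "\<And>a b v. a < 2 \<Longrightarrow> b < 2 \<Longrightarrow> pq a (z a b (pq b v)) = pq a (x a b (pq b v))"
    by auto
  define j where "j = opmat_add 2 z (opmat_scale 2 (-1) x)"
  have jm: "j \<in> M2"
    unfolding j_def using zm x by (intro opmats_add opmats_scale)
  have "j \<in> compression_kernel"
    using jm same by (simp add: compression_kernel_def j_def opmat_add_apply opmat_scale_apply
        V_diff[OF pq_entry_in_V])
  moreover have "z = opmat_add 2 x j"
    by (rule opmats_eqI[OF zm opmats_add[OF x jm]]) (simp add: j_def opmat_add_apply opmat_scale_apply)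
  ultimately show "z \<in> cls x"
    unfolding coset_def J_eq_compression_kernel by blast
qed

lemma coset_eq_iff:
  assumes "x \<in> M2" "y \<in> M2"
  shows "cls x = cls y \<longleftrightarrow> (\<forall>a<2. \<forall>b<2. \<forall>v. pq a (x a b (pq b v)) = pq a (y a b (pq b v)))"
  unfolding coset_eq_compression_class[OF assms(1)] coset_eq_compression_class[OF assms(2)]
  using assms by (auto simp: set_eq_iff)

lemma coset_eqD:
  assumes "x \<in> M2" "y \<in> M2" "cls x = cls y" "a < 2" "b < 2"
  shows "pq a (x a b (pq b v)) = pq a (y a b (pq b v))"
  using coset_eq_iff[OF assms(1,2)] assms(3-5) by blast

lemma rep_coset:
  assumes x: "x \<in> M2"
  shows "rep (cls x) \<in> M2" "cls (rep (cls x)) = cls x"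
proof -
  have "x \<in> cls x"
    using x by (simp add: coset_eq_compression_class)
  then have "rep (cls x) \<in> cls x"
    unfolding rep_def by (rule someI[of "\<lambda>y. y \<in> cls x"])
  then have rm: "rep (cls x) \<in> M2"
    and same: "\<forall>a<2. \<forall>b<2. \<forall>v. pq a (rep (cls x) a b (pq b v)) = pq a (x a b (pq b v))"
    by (simp_all add: coset_eq_compression_class[OF x])
  show "rep (cls x) \<in> M2"
    by (rule rm)
  show "cls (rep (cls x)) = cls x"
    using coset_eq_iff[OF rm x] same by blast
qed

lemma quotient_carrier: "carrier Q = cls ` M2"
  and quotient_zero: "zero Q = cls zero2"
  and quotient_add: "add Q A B = cls (opmat_add 2 (rep A) (rep B))"
  and quotient_scale: "scale Q c A = cls (opmat_scale 2 c (rep A))"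
  and quotient_star: "star Q A = cls (opmat_star 2 (rep A))"
  and quotient_unit: "unit Q = cls (pq_diag 1 p)"
  by (simp_all add: quotient_osys_def Let_def)

lemma quotient_add_coset:
  assumes x: "x \<in> M2" and y: "y \<in> M2"
  shows "add Q (cls x) (cls y) = cls (opmat_add 2 x y)"
  unfolding quotient_add
    coset_eq_iff[OF opmats_add[OF rep_coset(1)[OF x] rep_coset(1)[OF y]] opmats_add[OF x y]]
  using coset_eqD[OF rep_coset(1)[OF x] x rep_coset(2)[OF x]]
    coset_eqD[OF rep_coset(1)[OF y] y rep_coset(2)[OF y]]
  by (simp add: opmat_add_apply pq_entry_add)

lemma quotient_scale_coset:
  assumes x: "x \<in> M2"
  shows "scale Q c (cls x) = cls (opmat_scale 2 c x)"
  unfolding quotient_scale coset_eq_iff[OF opmats_scale[OF rep_coset(1)[OF x]] opmats_scale[OF x]]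
  using coset_eqD[OF rep_coset(1)[OF x] x rep_coset(2)[OF x]]
  by (simp add: opmat_scale_apply pq_entry_scale)

lemma opmat_star_coset_cong:
  assumes x: "x \<in> M2" and y: "y \<in> M2" and eq: "cls x = cls y"
  shows "cls (opmat_star 2 x) = cls (opmat_star 2 y)"
  unfolding coset_eq_iff[OF opmats_star[OF x] opmats_star[OF y]]
proof (intro allI impI)
  fix a b :: nat and v assume ab: "a < 2" "b < 2"
  show "pq a (opmat_star 2 x a b (pq b v)) = pq a (opmat_star 2 y a b (pq b v))"
  proof (rule cinner_eqI)
    fix u
    have "cinner (pq a (opmat_star 2 x a b (pq b v))) u = cinner v (pq b (x b a (pq a u)))"
      by (rule compression_star[OF x ab])
    also have "\<dots> = cinner v (pq b (y b a (pq a u)))"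
      by (simp only: coset_eqD[OF x y eq ab(2) ab(1)])
    also have "\<dots> = cinner (pq a (opmat_star 2 y a b (pq b v))) u"
      by (rule compression_star[OF y ab, symmetric])
    finally show "cinner (pq a (opmat_star 2 x a b (pq b v))) u
        = cinner (pq a (opmat_star 2 y a b (pq b v))) u" .
  qed
qed

lemma quotient_star_coset:
  assumes x: "x \<in> M2"
  shows "star Q (cls x) = cls (opmat_star 2 x)"
  unfolding quotient_star using opmat_star_coset_cong[OF rep_coset(1)[OF x] x rep_coset(2)[OF x]] .

lemma quotient_carrierE:
  assumes "A \<in> carrier Q"
  obtains x where "x \<in> M2" "A = cls x"
  using assms unfolding quotient_carrier by blast

lemma coset_in_quotient_carrier: "x \<in> M2 \<Longrightarrow> cls x \<in> carrier Q"
  unfolding quotient_carrier by blast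

lemma opmat_add_zero2: "x \<in> M2 \<Longrightarrow> opmat_add 2 x zero2 = x"
  by (rule opmats_eqI[OF opmats_add[OF _ opmats_zero]]) (auto simp: opmat_add_apply zop_def)

lemma quotient_complex_vector_space: "complex_vector_space Q"
  unfolding complex_vector_space_def
proof (intro conjI ballI allI)
  show "zero Q \<in> carrier Q"
    unfolding quotient_zero using opmats_zero by (rule coset_in_quotient_carrier)
next
  fix A B assume "A \<in> carrier Q" "B \<in> carrier Q"
  then show "add Q A B \<in> carrier Q"
    by (auto elim!: quotient_carrierE simp: quotient_add_coset opmats_add coset_in_quotient_carrier)
next
  fix c A assume "A \<in> carrier Q"
  then show "scale Q c A \<in> carrier Q"
    by (auto elim!: quotient_carrierE simp: quotient_scale_coset opmats_scale coset_in_quotient_carrier)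
next
  fix A B C assume "A \<in> carrier Q" "B \<in> carrier Q" "C \<in> carrier Q"
  then show "add Q (add Q A B) C = add Q A (add Q B C)"
    by (auto elim!: quotient_carrierE simp: quotient_add_coset opmats_add opmat_add_assoc)
next
  fix A B assume "A \<in> carrier Q" "B \<in> carrier Q"
  then show "add Q A B = add Q B A"
    by (auto elim!: quotient_carrierE simp: quotient_add_coset opmat_add_commute)
next
  fix A assume "A \<in> carrier Q"
  then show "add Q (zero Q) A = A"
    by (auto elim!: quotient_carrierE simp: quotient_zero quotient_add_coset opmats_zero
        opmat_add_commute opmat_add_zero2)
next
  fix A assume "A \<in> carrier Q"
  then obtain x where x: "x \<in> M2" "A = cls x"
    by (rule quotient_carrierE)
  have "opmat_add 2 x (opmat_scale 2 (-1) x) = zero2"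
    by (rule opmats_eqI[OF opmats_add[OF x(1) opmats_scale[OF x(1)]] opmats_zero])
      (simp add: opmat_add_apply opmat_scale_apply zop_def)
  then have "add Q A (cls (opmat_scale 2 (-1) x)) = zero Q"
    using x by (simp add: quotient_add_coset opmats_scale quotient_zero)
  then show "\<exists>B\<in>carrier Q. add Q A B = zero Q"
    using x by (blast intro: coset_in_quotient_carrier opmats_scale)
next
  fix a A B assume "A \<in> carrier Q" "B \<in> carrier Q"
  moreover have distrib:
    "opmat_scale 2 a (opmat_add 2 x y) = opmat_add 2 (opmat_scale 2 a x) (opmat_scale 2 a y)" for x y
    by (intro ext) (simp add: opmat_scale_def opmat_add_def opscale_def opadd_def cs.scale_right_distrib)
  ultimately show "scale Q a (add Q A B) = add Q (scale Q a A) (scale Q a B)"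
    by (auto elim!: quotient_carrierE
        simp: quotient_add_coset quotient_scale_coset opmats_add opmats_scale distrib)
next
  fix a b A assume "A \<in> carrier Q"
  moreover have distrib:
    "opmat_scale 2 (a + b) x = opmat_add 2 (opmat_scale 2 a x) (opmat_scale 2 b x)" for x
    by (intro ext) (simp add: opmat_scale_def opmat_add_def opscale_def opadd_def cs.scale_left_distrib)
  ultimately show "scale Q (a + b) A = add Q (scale Q a A) (scale Q b A)"
    by (auto elim!: quotient_carrierE
        simp: quotient_add_coset quotient_scale_coset opmats_add opmats_scale distrib)
next
  fix a b A assume "A \<in> carrier Q"
  moreover have assoc: "opmat_scale 2 a (opmat_scale 2 b x) = opmat_scale 2 (a * b) x" for x
    by (intro ext) (simp add: opmat_scale_def opscale_def)
  ultimately show "scale Q a (scale Q b A) = scale Q (a * b) A"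
    by (auto elim!: quotient_carrierE simp: quotient_scale_coset opmats_scale assoc)
next
  fix A assume "A \<in> carrier Q"
  moreover have one: "x \<in> M2 \<Longrightarrow> opmat_scale 2 1 x = x" for x
    by (rule opmats_eqI) (auto simp: opmats_scale opmat_scale_apply)
  ultimately show "scale Q 1 A = A"
    by (auto elim!: quotient_carrierE simp: quotient_scale_coset one)
qed

lemma quotient_star_vector_space: "star_vector_space Q"
  unfolding star_vector_space_def
proof (intro conjI ballI allI quotient_complex_vector_space)
  fix A assume "A \<in> carrier Q"
  then show "star Q A \<in> carrier Q"
    by (auto elim!: quotient_carrierE simp: quotient_star_coset opmats_star coset_in_quotient_carrier)
next
  fix A assume "A \<in> carrier Q"
  then show "star Q (star Q A) = A"
    by (auto elim!: quotient_carrierE simp: quotient_star_coset opmats_star opmat_star_star)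
next
  fix A B assume "A \<in> carrier Q" "B \<in> carrier Q"
  then show "star Q (add Q A B) = add Q (star Q A) (star Q B)"
    by (auto elim!: quotient_carrierE simp: quotient_star_coset quotient_add_coset opmats_star
        opmats_add opmat_star_add)
next
  fix c A assume "A \<in> carrier Q"
  then show "star Q (scale Q c A) = scale Q (cnj c) (star Q A)"
    by (auto elim!: quotient_carrierE simp: quotient_star_coset quotient_scale_coset opmats_star
        opmats_scale opmat_star_scale)
qed

section \<open>Matrices over the quotient\<close>

text \<open>A matrix over \<open>M\<^sub>2(V)/J\<close> is handled through a lift in \<open>M\<^sub>n(M\<^sub>2(V))\<close>, stored as an
  \<open>n \<times> n\<close> array of \<open>2 \<times> 2\<close> matrices; \<open>block_form n y \<xi>\<close> is the quadratic form of the compression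
  of its shuffle by \<open>p\<^sub>n \<oplus> q\<^sub>n\<close>.\<close>

definition blocks :: "nat \<Rightarrow> (nat \<Rightarrow> nat \<Rightarrow> 'h opmat) set" where
  "blocks n = {y. \<forall>i j. (i < n \<and> j < n \<longrightarrow> y i j \<in> M2)
                      \<and> (\<not> (i < n \<and> j < n) \<longrightarrow> y i j = zero2)}"

definition coset_mat :: "nat \<Rightarrow> (nat \<Rightarrow> nat \<Rightarrow> 'h opmat) \<Rightarrow> nat \<Rightarrow> nat \<Rightarrow> 'h opmat set" where
  "coset_mat n y = (\<lambda>i j. if i < n \<and> j < n then cls (y i j) else cls zero2)"

definition block_hermitian :: "nat \<Rightarrow> (nat \<Rightarrow> nat \<Rightarrow> 'h opmat) \<Rightarrow> bool" where
  "block_hermitian n y \<longleftrightarrow> (\<forall>i<n. \<forall>j<n. \<forall>a<2. \<forall>b<2. y i j a b = adj (y j i b a))"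

definition block_form :: "nat \<Rightarrow> (nat \<Rightarrow> nat \<Rightarrow> 'h opmat) \<Rightarrow> (nat \<Rightarrow> 'h) \<Rightarrow> complex" where
  "block_form n y \<xi> = compression_form (2*n) (pq_diag_entry p n) (shuffle n y) \<xi>"

definition block_add ::
    "nat \<Rightarrow> (nat \<Rightarrow> nat \<Rightarrow> 'h opmat) \<Rightarrow> (nat \<Rightarrow> nat \<Rightarrow> 'h opmat) \<Rightarrow> nat \<Rightarrow> nat \<Rightarrow> 'h opmat" where
  "block_add n y w = (\<lambda>i j. if i < n \<and> j < n then opmat_add 2 (y i j) (w i j) else zero2)"

definition block_scale :: "nat \<Rightarrow> complex \<Rightarrow> (nat \<Rightarrow> nat \<Rightarrow> 'h opmat) \<Rightarrow> nat \<Rightarrow> nat \<Rightarrow> 'h opmat" where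
  "block_scale n c y = (\<lambda>i j. if i < n \<and> j < n then opmat_scale 2 c (y i j) else zero2)"

definition block_unit :: "nat \<Rightarrow> nat \<Rightarrow> nat \<Rightarrow> 'h opmat" where
  "block_unit n = (\<lambda>i j. if i < n \<and> j < n \<and> i = j then pq_diag 1 p else zero2)"

definition pq_norm_sq :: "nat \<Rightarrow> (nat \<Rightarrow> 'h) \<Rightarrow> real" where
  "pq_norm_sq n \<xi> = (\<Sum>r<2*n. (cnorm (pq_diag_entry p n r (\<xi> r)))\<^sup>2)"

lemma pq_norm_sq_nonneg: "pq_norm_sq n \<xi> \<ge> 0"
  unfolding pq_norm_sq_def by (intro sum_nonneg) simp

lemma blocks_entry: "y \<in> blocks n \<Longrightarrow> i < n \<Longrightarrow> j < n \<Longrightarrow> y i j \<in> M2"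
  by (simp add: blocks_def)

lemma pq_entry_div: "r < 2*n \<Longrightarrow> pq_diag_entry p n r = pq_diag_entry p 1 (r div n)"
  by (cases "n = 0") (auto simp: pq_diag_entry_def div_eq_0_iff)

lemma shuffle_opmats:
  assumes y: "y \<in> blocks n"
  shows "shuffle n y \<in> opmats (2*n) V"
proof -
  have A: "shuffle n y i j \<in> V" if ij: "i < 2*n" "j < 2*n" for i j
  proof -
    note di = block_index_bounds[OF ij(1)] and dj = block_index_bounds[OF ij(2)]
    show ?thesis
      using ij opmats_entry[OF blocks_entry[OF y conjunct1[OF di] conjunct1[OF dj]]
          conjunct2[OF di] conjunct2[OF dj]]
      by (simp add: shuffle_def)
  qed
  have B: "shuffle n y i j = zop" if "\<not> (i < 2*n \<and> j < 2*n)" for i j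
    using that unfolding shuffle_def by auto
  show ?thesis unfolding opmats_def using A B by blast
qed

lemma shuffle_apply:
  "i < n \<Longrightarrow> j < n \<Longrightarrow> a < 2 \<Longrightarrow> b < 2 \<Longrightarrow> shuffle n y (a*n+i) (b*n+j) = y i j a b"
  unfolding shuffle_def using block_index_less[of i n a] block_index_less[of j n b] by simp

lemma shuffle_hermitian_iff:
  assumes y: "y \<in> blocks n"
  shows "(shuffle n y = opmat_star (2*n) (shuffle n y)) \<longleftrightarrow> block_hermitian n y"
proof
  assume h: "shuffle n y = opmat_star (2*n) (shuffle n y)"
  show "block_hermitian n y" unfolding block_hermitian_def
  proof (intro allI impI)
    fix i j a b :: nat assume ij: "i < n" "j < n" "a < 2" "b < 2"
    have "y i j a b = shuffle n y (a*n+i) (b*n+j)" using ij by (simp add: shuffle_apply)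
    also have "\<dots> = opmat_star (2*n) (shuffle n y) (a*n+i) (b*n+j)" using h by simp
    also have "\<dots> = adj (shuffle n y (b*n+j) (a*n+i))"
      using ij block_index_less by (simp add: opmat_star_apply)
    also have "\<dots> = adj (y j i b a)" using ij by (simp add: shuffle_apply)
    finally show "y i j a b = adj (y j i b a)" .
  qed
next
  assume h: "block_hermitian n y"
  show "shuffle n y = opmat_star (2*n) (shuffle n y)"
  proof (rule ext, rule ext)
    fix r s
    show "shuffle n y r s = opmat_star (2*n) (shuffle n y) r s"
    proof (cases "r < 2*n \<and> s < 2*n")
      case True
      note dr = block_index_bounds[of r n] and ds = block_index_bounds[of s n]
      have "y (r mod n) (s mod n) (r div n) (s div n) = adj (y (s mod n) (r mod n) (s div n) (r div n))"
        using h dr ds True unfolding block_hermitian_def by blast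
      then show ?thesis
        using True by (simp add: shuffle_def opmat_star_def)
    next
      case False
      then show ?thesis by (auto simp: shuffle_def opmat_star_def)
    qed
  qed
qed

lemma shuffle_in_Ccone_iff:
  assumes y: "y \<in> blocks n"
  shows "shuffle n y \<in> Ccone V p n \<longleftrightarrow>
    block_hermitian n y \<and> (\<forall>\<xi>. Im (block_form n y \<xi>) = 0 \<and> 0 \<le> Re (block_form n y \<xi>))"
  unfolding Ccone_iff_compression_form block_form_def
  using shuffle_opmats[OF y] shuffle_hermitian_iff[OF y] by auto

lemma block_form_cong:
  assumes y: "y \<in> blocks n" and w: "w \<in> blocks n"
    and e: "\<And>i j. i < n \<Longrightarrow> j < n \<Longrightarrow> cls (y i j) = cls (w i j)"
  shows "block_form n y \<xi> = block_form n w \<xi>"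
  unfolding block_form_def
proof (rule compression_form_cong)
  fix r s v assume rs: "r < 2*n" "s < 2*n"
  note dr = block_index_bounds[OF rs(1)] and ds = block_index_bounds[OF rs(2)]
  have "shuffle n y r s = y (r mod n) (s mod n) (r div n) (s div n)"
    and "shuffle n w r s = w (r mod n) (s mod n) (r div n) (s div n)"
    using rs by (simp_all add: shuffle_def)
  then show "pq_diag_entry p n r (shuffle n y r s (pq_diag_entry p n s v))
      = pq_diag_entry p n r (shuffle n w r s (pq_diag_entry p n s v))"
    unfolding pq_entry_div[OF rs(1)] pq_entry_div[OF rs(2)]
    using coset_eqD[OF blocks_entry[OF y conjunct1[OF dr] conjunct1[OF ds]]
        blocks_entry[OF w conjunct1[OF dr] conjunct1[OF ds]] e[OF conjunct1[OF dr] conjunct1[OF ds]]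
        conjunct2[OF dr] conjunct2[OF ds]]
    by simp
qed

lemma quotient_cone_eq: "cone Q n = {coset_mat n y | y. y \<in> blocks n \<and> shuffle n y \<in> Ccone V p n}"
  by (simp add: quotient_osys_def Let_def coset_mat_def blocks_def)

lemma coset_mat_in_coneI:
  assumes "y \<in> blocks n" "block_hermitian n y"
    and "\<And>\<xi>. Im (block_form n y \<xi>) = 0" "\<And>\<xi>. 0 \<le> Re (block_form n y \<xi>)"
  shows "coset_mat n y \<in> cone Q n"
  unfolding quotient_cone_eq using assms shuffle_in_Ccone_iff by blast

lemma quotient_coneE:
  assumes "X \<in> cone Q n"
  obtains y where "y \<in> blocks n" "X = coset_mat n y" "block_hermitian n y"
    "\<And>\<xi>. Im (block_form n y \<xi>) = 0" "\<And>\<xi>. 0 \<le> Re (block_form n y \<xi>)"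
  using assms unfolding quotient_cone_eq using shuffle_in_Ccone_iff by blast

lemma coset_mat_eqD:
  "coset_mat n y = coset_mat n w \<Longrightarrow> i < n \<Longrightarrow> j < n \<Longrightarrow> cls (y i j) = cls (w i j)"
  unfolding coset_mat_def by (drule fun_cong[of _ _ i], drule fun_cong[of _ _ j]) simp

lemma block_form_if_in_cone:
  assumes y: "y \<in> blocks n" and c: "coset_mat n y \<in> cone Q n"
  shows "Im (block_form n y \<xi>) = 0 \<and> 0 \<le> Re (block_form n y \<xi>)"
proof -
  obtain w where w: "w \<in> blocks n" "coset_mat n y = coset_mat n w"
    "\<And>\<xi>. Im (block_form n w \<xi>) = 0" "\<And>\<xi>. 0 \<le> Re (block_form n w \<xi>)"
    using c by (rule quotient_coneE) blast
  have "block_form n y \<xi> = block_form n w \<xi>"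
    using y w(1) coset_mat_eqD[OF w(2)] by (rule block_form_cong)
  then show ?thesis
    using w by simp
qed

lemma pq_diag_1_in_M2: "pq_diag 1 p \<in> M2"
  unfolding pq_diag_eq using pq_entry_in_V zop_in_V by (simp add: opmats_def)

lemma block_add_blocks: "y \<in> blocks n \<Longrightarrow> w \<in> blocks n \<Longrightarrow> block_add n y w \<in> blocks n"
  unfolding blocks_def block_add_def by (auto intro: opmats_add)

lemma block_scale_blocks: "y \<in> blocks n \<Longrightarrow> block_scale n c y \<in> blocks n"
  unfolding blocks_def block_scale_def by (auto intro: opmats_scale)

lemma block_unit_blocks: "block_unit n \<in> blocks n"
  unfolding blocks_def block_unit_def using pq_diag_1_in_M2 opmats_zero by auto

lemma zero_blocks: "(\<lambda>i j. zero2) \<in> blocks n"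
  unfolding blocks_def using opmats_zero by auto

lemma shuffle_block_add:
  assumes "y \<in> blocks n" "w \<in> blocks n"
  shows "shuffle n (block_add n y w) = opmat_add (2*n) (shuffle n y) (shuffle n w)"
proof (rule ext, rule ext)
  fix r s
  show "shuffle n (block_add n y w) r s = opmat_add (2*n) (shuffle n y) (shuffle n w) r s"
    using block_index_bounds[of r n] block_index_bounds[of s n]
    by (simp add: shuffle_def block_add_def opmat_add_def)
qed

lemma shuffle_block_scale: "shuffle n (block_scale n c y) = opmat_scale (2*n) c (shuffle n y)"
proof (rule ext, rule ext)
  fix r s
  show "shuffle n (block_scale n c y) r s = opmat_scale (2*n) c (shuffle n y) r s"
    using block_index_bounds[of r n] block_index_bounds[of s n]
    by (simp add: shuffle_def block_scale_def opmat_scale_def)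
qed

lemma shuffle_block_unit: "shuffle n (block_unit n) = pq_diag n p"
proof (rule ext, rule ext)
  fix r s
  show "shuffle n (block_unit n) r s = pq_diag n p r s"
  proof (cases "r < 2*n \<and> s < 2*n")
    case True
    note dr = block_index_bounds[of r n] and ds = block_index_bounds[of s n]
    have eq: "(r mod n = s mod n \<and> r div n = s div n) \<longleftrightarrow> r = s"
      by (metis div_mult_mod_eq)
    show ?thesis
      using True dr ds eq pq_entry_div[of r n]
      unfolding shuffle_def block_unit_def pq_diag_eq[of n] pq_diag_eq[of 1] by auto
  next
    case False
    then show ?thesis unfolding shuffle_def pq_diag_eq by auto
  qed
qed

lemma block_form_add:
  "y \<in> blocks n \<Longrightarrow> w \<in> blocks n \<Longrightarrow>
    block_form n (block_add n y w) \<xi> = block_form n y \<xi> + block_form n w \<xi>"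
  unfolding block_form_def
  by (simp add: shuffle_block_add compression_form_add shuffle_opmats pq_entry_in_V)

lemma block_form_scale:
  "y \<in> blocks n \<Longrightarrow> block_form n (block_scale n c y) \<xi> = c * block_form n y \<xi>"
  unfolding block_form_def
  by (simp add: shuffle_block_scale compression_form_scale shuffle_opmats pq_entry_in_V)

lemma block_form_unit: "block_form n (block_unit n) \<xi> = of_real (pq_norm_sq n \<xi>)"
proof -
  have "block_form n (block_unit n) \<xi> = (\<Sum>r<2*n. \<Sum>s<2*n.
      if s = r then cinner (pq_diag_entry p n r (\<xi> r)) (pq_diag_entry p n r (\<xi> r)) else 0)"
    unfolding block_form_def shuffle_block_unit compression_form_def
    by (intro sum.cong refl) (auto simp: pq_diag_eq zop_def pq_entry_zero pq_entry_idem pq_entry_selfadj)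
  also have "\<dots> = (\<Sum>r<2*n. of_real ((cnorm (pq_diag_entry p n r (\<xi> r)))\<^sup>2))"
    by (intro sum.cong refl) (simp add: cinner_self_cnorm)
  finally show ?thesis
    unfolding pq_norm_sq_def by simp
qed

lemma block_form_zero: "block_form n (\<lambda>i j. zero2) \<xi> = 0"
  unfolding block_form_def compression_form_def shuffle_def by (simp add: zop_def pq_entry_zero)

lemma block_hermitian_add:
  assumes y: "y \<in> blocks n" and w: "w \<in> blocks n"
    and hy: "block_hermitian n y" and hw: "block_hermitian n w"
  shows "block_hermitian n (block_add n y w)"
  unfolding block_hermitian_def
proof (intro allI impI)
  fix i j a b :: nat assume ij: "i < n" "j < n" "a < 2" "b < 2"
  have e1: "y i j a b = adj (y j i b a)" and e2: "w i j a b = adj (w j i b a)"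
    using hy hw ij unfolding block_hermitian_def by blast+
  have V1: "y j i b a \<in> V" "w j i b a \<in> V"
    using opmats_entry[OF blocks_entry[OF y ij(2,1)] ij(4,3)]
      opmats_entry[OF blocks_entry[OF w ij(2,1)] ij(4,3)] by auto
  show "block_add n y w i j a b = adj (block_add n y w j i b a)"
    using ij V1 by (simp add: block_add_def opmat_add_def adj_opadd e1 e2)
qed

lemma block_hermitian_scale:
  assumes y: "y \<in> blocks n" and hy: "block_hermitian n y"
  shows "block_hermitian n (block_scale n (complex_of_real r) y)"
  unfolding block_hermitian_def
proof (intro allI impI)
  fix i j a b :: nat assume ij: "i < n" "j < n" "a < 2" "b < 2"
  have e1: "y i j a b = adj (y j i b a)"
    using hy ij unfolding block_hermitian_def by blast
  have V1: "y j i b a \<in> V"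
    using opmats_entry[OF blocks_entry[OF y ij(2,1)] ij(4,3)] .
  show "block_scale n (complex_of_real r) y i j a b
      = adj (block_scale n (complex_of_real r) y j i b a)"
    using ij V1 by (simp add: block_scale_def opmat_scale_def adj_opscale e1)
qed

lemma block_hermitian_unit: "block_hermitian n (block_unit n)"
  unfolding block_hermitian_def block_unit_def pq_diag_eq by (auto simp: pq_entry_adj adj_zop)

lemma block_hermitian_zero: "block_hermitian n (\<lambda>i j. zero2)"
  unfolding block_hermitian_def by (simp add: adj_zop)

lemma madd_coset_mat:
  "y \<in> blocks n \<Longrightarrow> w \<in> blocks n \<Longrightarrow>
    madd Q n (coset_mat n y) (coset_mat n w) = coset_mat n (block_add n y w)"
  unfolding madd_def coset_mat_def block_add_def
  by (intro ext) (auto simp: quotient_add_coset blocks_entry quotient_zero)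

lemma mscale_coset_mat:
  "y \<in> blocks n \<Longrightarrow> mscale Q n c (coset_mat n y) = coset_mat n (block_scale n c y)"
  unfolding mscale_def coset_mat_def block_scale_def
  by (intro ext) (auto simp: quotient_scale_coset blocks_entry quotient_zero)

lemma unitmat_eq_coset_mat: "unitmat Q n = coset_mat n (block_unit n)"
  unfolding unitmat_def coset_mat_def block_unit_def
  by (intro ext) (auto simp: quotient_unit quotient_zero)

lemma mzero_eq_coset_mat: "mzero Q = coset_mat n (\<lambda>i j. zero2)"
  unfolding mzero_def coset_mat_def by (intro ext) (simp add: quotient_zero)

lemma coset_mat_hermitian:
  assumes y: "y \<in> blocks n" and h: "block_hermitian n y"
  shows "coset_mat n y \<in> hermitians Q n"
  unfolding hermitians_def
proof (intro CollectI conjI)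
  show "coset_mat n y \<in> mats Q n"
    unfolding mats_def coset_mat_def
    using y by (auto simp: quotient_zero coset_in_quotient_carrier blocks_entry)
  have st: "opmat_star 2 (y j i) = y i j" if ij: "i < n" "j < n" for i j
  proof (rule opmats_eqI[OF opmats_star[OF blocks_entry[OF y ij(2,1)]] blocks_entry[OF y ij]])
    fix a b :: nat and v assume ab: "a < 2" "b < 2"
    then have "y i j a b = adj (y j i b a)"
      using h ij unfolding block_hermitian_def by blast
    then show "opmat_star 2 (y j i) a b v = y i j a b v"
      using ab by (simp add: opmat_star_apply)
  qed
  show "mstar Q n (coset_mat n y) = coset_mat n y"
    unfolding mstar_def coset_mat_def
    by (intro ext) (auto simp: quotient_star_coset blocks_entry[OF y] st quotient_zero)
qed

lemma mats_liftE:
  assumes X: "X \<in> mats Q n"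
  obtains y where "y \<in> blocks n" "X = coset_mat n y"
proof -
  define y where "y = (\<lambda>i j. if i < n \<and> j < n then rep (X i j) else zero2)"
  have lift: "y i j \<in> M2 \<and> cls (y i j) = X i j" if ij: "i < n" "j < n" for i j
  proof -
    have "X i j \<in> carrier Q"
      using X ij by (simp add: mats_def)
    then obtain x where x: "x \<in> M2" "X i j = cls x"
      by (rule quotient_carrierE)
    then show ?thesis
      using ij rep_coset[OF x(1)] by (simp add: y_def)
  qed
  have out: "X i j = zero Q" if "\<not> (i < n \<and> j < n)" for i j
    using X that by (simp add: mats_def)
  have "y \<in> blocks n"
    using lift by (simp add: blocks_def y_def)
  moreover have "X = coset_mat n y"
  proof (intro ext)
    fix i j
    show "X i j = coset_mat n y i j"
      using lift[of i j] out[of i j]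
      by (cases "i < n \<and> j < n") (auto simp: coset_mat_def quotient_zero)
  qed
  ultimately show ?thesis
    by (rule that)
qed

definition block_real_part :: "nat \<Rightarrow> (nat \<Rightarrow> nat \<Rightarrow> 'h opmat) \<Rightarrow> nat \<Rightarrow> nat \<Rightarrow> 'h opmat" where
  "block_real_part n y = (\<lambda>i j. if i < n \<and> j < n
     then opmat_scale 2 (1/2) (opmat_add 2 (y i j) (opmat_star 2 (y j i))) else zero2)"

lemma block_real_part_blocks: "y \<in> blocks n \<Longrightarrow> block_real_part n y \<in> blocks n"
  unfolding blocks_def block_real_part_def by (auto intro!: opmats_scale opmats_add opmats_star)

lemma block_hermitian_real_part:
  assumes y: "y \<in> blocks n"
  shows "block_hermitian n (block_real_part n y)"
  unfolding block_hermitian_def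
proof (intro allI impI)
  fix i j a b :: nat assume ij: "i < n" "j < n" "a < 2" "b < 2"
  have V1: "y i j a b \<in> V" "y j i b a \<in> V"
    using opmats_entry[OF blocks_entry[OF y ij(1,2)] ij(3,4)]
      opmats_entry[OF blocks_entry[OF y ij(2,1)] ij(4,3)] by auto
  have "adj (block_real_part n y j i b a) = opscale (1/2) (opadd (adj (y j i b a)) (y i j a b))"
    using ij V1 by (simp add: block_real_part_def opmat_scale_def opmat_add_def opmat_star_def
        adj_opscale adj_opadd opadd_in_V adj_in_V V_adj_adj)
  also have "\<dots> = block_real_part n y i j a b"
    using ij by (simp add: block_real_part_def opmat_scale_def opmat_add_def opmat_star_def
        opadd_commute)
  finally show "block_real_part n y i j a b = adj (block_real_part n y j i b a)"
    by simp
qed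

lemma opmat_scale_half_double: "x \<in> opmats N V \<Longrightarrow> opmat_scale N (1/2) (opmat_add N x x) = x"
  by (rule opmats_eqI[OF opmats_scale[OF opmats_add]])
    (simp_all add: opmat_scale_apply opmat_add_apply cscale_half_double)

lemma hermitian_liftE:
  assumes X: "X \<in> hermitians Q n"
  obtains y where "y \<in> blocks n" "block_hermitian n y" "X = coset_mat n y"
proof -
  obtain y where y: "y \<in> blocks n" and Xeq: "X = coset_mat n y"
    using X by (auto simp: hermitians_def elim: mats_liftE)
  have "cls (block_real_part n y i j) = cls (y i j)" if ij: "i < n" "j < n" for i j
  proof -
    note yij = blocks_entry[OF y ij] and yji = blocks_entry[OF y ij(2,1)]
    have "mstar Q n X i j = X i j"
      using X by (simp add: hermitians_def)
    then have star: "cls (opmat_star 2 (y j i)) = cls (y i j)"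
      using ij by (simp add: Xeq mstar_def coset_mat_def quotient_star_coset yji)
    have "cls (block_real_part n y i j)
        = scale Q (1/2) (add Q (cls (y i j)) (cls (opmat_star 2 (y j i))))"
      using ij yij yji by (simp add: block_real_part_def quotient_add_coset quotient_scale_coset
          opmats_star opmats_add)
    also have "\<dots> = cls (y i j)"
      using yij by (simp add: star quotient_add_coset quotient_scale_coset opmats_add
          opmat_scale_half_double)
    finally show ?thesis .
  qed
  then have "X = coset_mat n (block_real_part n y)"
    unfolding Xeq coset_mat_def by (intro ext) simp
  then show ?thesis
    using that block_real_part_blocks[OF y] block_hermitian_real_part[OF y] by blast
qed

lemma block_form_real:
  assumes y: "y \<in> blocks n" and hy: "block_hermitian n y"
  shows "Im (block_form n y \<xi>) = 0"
proof -
  have "shuffle n y = opmat_star (2*n) (shuffle n y)"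
    using shuffle_hermitian_iff[OF y] hy by simp
  then show ?thesis
    unfolding block_form_def
    by (rule compression_form_real[OF shuffle_opmats[OF y] _ pq_entry_in_V pq_entry_selfadj])
qed

lemma compression_form_bound:
  assumes x: "x \<in> opmats N V" and P_selfadj: "\<And>r a b. cinner (P r a) b = cinner a (P r b)"
  shows "\<exists>K\<ge>0. \<forall>\<xi>. cmod (compression_form N P x \<xi>)
    \<le> K * (\<Sum>r<N. (cnorm (P r (\<xi> r)))\<^sup>2)"
proof -
  have "\<forall>r s. \<exists>K. \<forall>z. cnorm (x r s z) \<le> K * cnorm z"
    using opmats_entry_in_V[OF x] V_bop unfolding bop_def by blast
  then obtain B where B: "\<And>r s z. cnorm (x r s z) \<le> B r s * cnorm z"
    by metis
  define K where "K = 2 * (\<Sum>r<N. \<Sum>s<N. \<bar>B r s\<bar>)"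
  have "cmod (compression_form N P x \<xi>) \<le> K * (\<Sum>r<N. (cnorm (P r (\<xi> r)))\<^sup>2)" for \<xi>
  proof -
    define S where "S = (\<Sum>r<N. (cnorm (P r (\<xi> r)))\<^sup>2)"
    have le_S: "(cnorm (P t (\<xi> t)))\<^sup>2 \<le> S" if "t < N" for t
      unfolding S_def using that by (intro member_le_sum) auto
    have "cmod (cinner (P r (x r s (P s (\<xi> s)))) (\<xi> r)) \<le> \<bar>B r s\<bar> * (2 * S)"
      if "r < N" "s < N" for r s
    proof -
      have "cmod (cinner (P r (x r s (P s (\<xi> s)))) (\<xi> r))
          \<le> \<bar>B r s\<bar> * ((cnorm (P s (\<xi> s)))\<^sup>2 + (cnorm (P r (\<xi> r)))\<^sup>2)"
        unfolding P_selfadj by (rule cmod_cinner_le_sum_sq[OF B])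
      also have "\<dots> \<le> \<bar>B r s\<bar> * (2 * S)"
        using le_S[OF that(1)] le_S[OF that(2)] by (intro mult_left_mono) auto
      finally show ?thesis .
    qed
    then have "cmod (compression_form N P x \<xi>) \<le> (\<Sum>r<N. \<Sum>s<N. \<bar>B r s\<bar> * (2 * S))"
      unfolding compression_form_def
      by (intro order_trans[OF norm_sum sum_mono] order_trans[OF norm_sum sum_mono]) auto
    also have "\<dots> = (\<Sum>r<N. \<Sum>s<N. \<bar>B r s\<bar>) * (2 * S)"
      by (simp add: sum_distrib_right)
    also have "\<dots> = K * S"
      by (simp add: K_def)
    finally show ?thesis
      unfolding S_def .
  qed
  moreover have "K \<ge> 0"
    unfolding K_def by (intro mult_nonneg_nonneg sum_nonneg) auto
  ultimately show ?thesis
    by blast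
qed

lemma quotient_cone_hermitian: "cone Q n \<subseteq> hermitians Q n"
proof
  fix X assume "X \<in> cone Q n"
  then obtain y where "y \<in> blocks n" "X = coset_mat n y" "block_hermitian n y"
    by (rule quotient_coneE)
  then show "X \<in> hermitians Q n"
    using coset_mat_hermitian by simp
qed

lemma quotient_cone_add: "X \<in> cone Q n \<Longrightarrow> Y \<in> cone Q n \<Longrightarrow> madd Q n X Y \<in> cone Q n"
proof -
  assume "X \<in> cone Q n" "Y \<in> cone Q n"
  then obtain y w where y: "y \<in> blocks n" "X = coset_mat n y" "block_hermitian n y"
    "\<And>\<xi>. Im (block_form n y \<xi>) = 0" "\<And>\<xi>. 0 \<le> Re (block_form n y \<xi>)"
    and w: "w \<in> blocks n" "Y = coset_mat n w" "block_hermitian n w"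
    "\<And>\<xi>. Im (block_form n w \<xi>) = 0" "\<And>\<xi>. 0 \<le> Re (block_form n w \<xi>)"
    by (metis quotient_coneE)
  have "madd Q n X Y = coset_mat n (block_add n y w)"
    using y w madd_coset_mat by simp
  also have "\<dots> \<in> cone Q n"
    using y w by (intro coset_mat_in_coneI)
      (auto simp: block_add_blocks block_hermitian_add block_form_add)
  finally show ?thesis .
qed

lemma quotient_cone_scale: "X \<in> cone Q n \<Longrightarrow> r \<ge> 0 \<Longrightarrow> mscale Q n (complex_of_real r) X \<in> cone Q n"
proof -
  assume "X \<in> cone Q n" "r \<ge> 0"
  then obtain y where y: "y \<in> blocks n" "X = coset_mat n y" "block_hermitian n y"
    "\<And>\<xi>. Im (block_form n y \<xi>) = 0" "\<And>\<xi>. 0 \<le> Re (block_form n y \<xi>)"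
    by (metis quotient_coneE)
  have "mscale Q n (complex_of_real r) X = coset_mat n (block_scale n (complex_of_real r) y)"
    using y mscale_coset_mat by simp
  also have "\<dots> \<in> cone Q n"
    using y \<open>r \<ge> 0\<close> by (intro coset_mat_in_coneI)
      (auto simp: block_scale_blocks block_hermitian_scale block_form_scale)
  finally show ?thesis .
qed

lemma coset_mat_eq_mzero_if_form_zero:
  assumes y: "y \<in> blocks n" and zero: "\<And>\<xi>. block_form n y \<xi> = 0"
  shows "coset_mat n y = mzero Q"
proof -
  have "cls (y i j) = cls zero2" if ij: "i < n" "j < n" for i j
    unfolding coset_eq_iff[OF blocks_entry[OF y ij] opmats_zero]
  proof (intro allI impI)
    fix a b :: nat and v assume ab: "a < 2" "b < 2"
    note ai = block_index_less[OF ij(1) ab(1)] and bj = block_index_less[OF ij(2) ab(2)]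
    have "pq_diag_entry p n (a*n+i) (shuffle n y (a*n+i) (b*n+j) (pq_diag_entry p n (b*n+j) v)) = 0"
      using compression_form_zero_entries[OF shuffle_opmats[OF y] pq_entry_in_V
          zero[unfolded block_form_def] ai bj] .
    then show "pq a (y i j a b (pq b v)) = pq a (zop (pq b v))"
      using ij ab by (simp add: shuffle_apply pq_entry_div[OF ai] pq_entry_div[OF bj] zop_def
          pq_entry_zero)
  qed
  then show ?thesis
    unfolding mzero_eq_coset_mat[of n] coset_mat_def by (intro ext) simp
qed

lemma quotient_cone_proper: "cone Q n \<inter> {X. mscale Q n (-1) X \<in> cone Q n} = {mzero Q}"
proof (intro equalityI subsetI)
  fix X assume "X \<in> cone Q n \<inter> {X. mscale Q n (-1) X \<in> cone Q n}"
  then have pos: "X \<in> cone Q n" and neg: "mscale Q n (-1) X \<in> cone Q n"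
    by auto
  obtain y where y: "y \<in> blocks n" "X = coset_mat n y"
    "\<And>\<xi>. Im (block_form n y \<xi>) = 0" "\<And>\<xi>. 0 \<le> Re (block_form n y \<xi>)"
    using pos by (rule quotient_coneE) blast
  have "coset_mat n (block_scale n (-1) y) \<in> cone Q n"
    using neg y by (simp add: mscale_coset_mat)
  then have neg_re: "Re (block_form n y \<xi>) \<le> 0" for \<xi>
    using block_form_if_in_cone[OF block_scale_blocks[OF y(1)]] block_form_scale[OF y(1), of "-1"]
    by fastforce
  have "block_form n y \<xi> = 0" for \<xi>
    using neg_re[of \<xi>] y(3,4)[of \<xi>] by (simp add: complex_eq_iff)
  then show "X \<in> {mzero Q}"
    using coset_mat_eq_mzero_if_form_zero[OF y(1)] y(2) by simp
next
  fix X assume "X \<in> {mzero Q}"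
  moreover have "mzero Q \<in> cone Q n"
    unfolding mzero_eq_coset_mat[of n]
    by (rule coset_mat_in_coneI) (auto simp: zero_blocks block_hermitian_zero block_form_zero)
  moreover have "opmat_scale 2 (-1) zero2 = zero2"
    by (intro ext) (simp add: opmat_scale_def opscale_def zop_def)
  then have "mscale Q n (-1) (mzero Q) = mzero Q"
    by (intro ext) (simp add: mscale_def mzero_def quotient_zero quotient_scale_coset[OF opmats_zero])
  ultimately show "X \<in> cone Q n \<inter> {X. mscale Q n (-1) X \<in> cone Q n}"
    by simp
qed

lemma quotient_unit_carrier: "unit Q \<in> carrier Q"
  unfolding quotient_unit using pq_diag_1_in_M2 by (rule coset_in_quotient_carrier)

lemma quotient_unit_star: "star Q (unit Q) = unit Q"
proof -
  have "opmat_star 2 (pq_diag 1 p) = pq_diag 1 p"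
    unfolding pq_diag_eq by (intro ext) (auto simp: opmat_star_def pq_entry_adj adj_zop)
  then show ?thesis
    unfolding quotient_unit quotient_star_coset[OF pq_diag_1_in_M2] by (simp only:)
qed

definition unit_shift :: "nat \<Rightarrow> real \<Rightarrow> (nat \<Rightarrow> nat \<Rightarrow> 'h opmat) \<Rightarrow> nat \<Rightarrow> nat \<Rightarrow> 'h opmat" where
  "unit_shift n r y = block_add n (block_scale n (complex_of_real r) (block_unit n)) y"

lemma unit_shift_blocks: "y \<in> blocks n \<Longrightarrow> unit_shift n r y \<in> blocks n"
  unfolding unit_shift_def by (intro block_add_blocks block_scale_blocks block_unit_blocks)

lemma block_hermitian_unit_shift:
  "y \<in> blocks n \<Longrightarrow> block_hermitian n y \<Longrightarrow> block_hermitian n (unit_shift n r y)"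
  unfolding unit_shift_def
  by (intro block_hermitian_add block_scale_blocks block_unit_blocks block_hermitian_scale
      block_hermitian_unit)

lemma block_form_unit_shift:
  "y \<in> blocks n \<Longrightarrow>
    block_form n (unit_shift n r y) \<xi> = complex_of_real (r * pq_norm_sq n \<xi>) + block_form n y \<xi>"
  unfolding unit_shift_def
  by (simp add: block_form_add block_scale_blocks block_unit_blocks block_form_scale block_form_unit)

lemma unit_shift_coset_mat:
  "y \<in> blocks n \<Longrightarrow>
    madd Q n (mscale Q n (complex_of_real r) (unitmat Q n)) (coset_mat n y)
      = coset_mat n (unit_shift n r y)"
  unfolding unit_shift_def unitmat_eq_coset_mat
  by (simp add: mscale_coset_mat madd_coset_mat block_unit_blocks block_scale_blocks)

lemma quotient_order_unit:
  assumes X: "X \<in> hermitians Q n"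
  shows "\<exists>r::real. r > 0 \<and> madd Q n (mscale Q n (complex_of_real r) (unitmat Q n)) X \<in> cone Q n"
proof -
  obtain y where y: "y \<in> blocks n" "block_hermitian n y" "X = coset_mat n y"
    using X by (rule hermitian_liftE)
  obtain K where K: "K \<ge> 0" "\<And>\<xi>. cmod (block_form n y \<xi>) \<le> K * pq_norm_sq n \<xi>"
    using compression_form_bound[where P = "pq_diag_entry p n", OF shuffle_opmats[OF y(1)] pq_entry_selfadj]
    unfolding block_form_def[symmetric] pq_norm_sq_def[symmetric] by blast
  have "0 \<le> Re (block_form n (unit_shift n (K + 1) y) \<xi>)" for \<xi>
    using K(2)[of \<xi>] abs_Re_le_cmod[of "block_form n y \<xi>"] pq_norm_sq_nonneg[of n \<xi>]
    by (simp add: block_form_unit_shift[OF y(1)] algebra_simps)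
  then have "coset_mat n (unit_shift n (K + 1) y) \<in> cone Q n"
    using y by (intro coset_mat_in_coneI unit_shift_blocks block_hermitian_unit_shift)
      (simp_all add: block_form_unit_shift block_form_real)
  moreover have "K + 1 > 0"
    using K(1) by simp
  ultimately show ?thesis
    unfolding y(3) unit_shift_coset_mat[OF y(1)] by blast
qed

lemma quotient_archimedean:
  assumes X: "X \<in> hermitians Q n"
    and H: "\<forall>r::real. r > 0 \<longrightarrow> madd Q n (mscale Q n (complex_of_real r) (unitmat Q n)) X \<in> cone Q n"
  shows "X \<in> cone Q n"
proof -
  obtain y where y: "y \<in> blocks n" "block_hermitian n y" "X = coset_mat n y"
    using X by (rule hermitian_liftE)
  have pos: "0 \<le> r * pq_norm_sq n \<xi> + Re (block_form n y \<xi>)" if "r > 0" for r \<xi>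
  proof -
    have "coset_mat n (unit_shift n r y) \<in> cone Q n"
      using H that unfolding y(3) unit_shift_coset_mat[OF y(1)] by blast
    then show ?thesis
      using block_form_if_in_cone[OF unit_shift_blocks[OF y(1)]]
      by (simp add: block_form_unit_shift[OF y(1)])
  qed
  have "0 \<le> Re (block_form n y \<xi>)" for \<xi>
  proof -
    have "- Re (block_form n y \<xi>) \<le> 0 + e" if e: "e > 0" for e
    proof -
      define r where "r = e / (pq_norm_sq n \<xi> + 1)"
      have "r > 0" "r * pq_norm_sq n \<xi> \<le> e"
        using e pq_norm_sq_nonneg[of n \<xi>] by (simp_all add: r_def field_simps)
      then show ?thesis
        using pos[of r \<xi>] by linarith
    qed
    then show ?thesis
      using field_le_epsilon[of "- Re (block_form n y \<xi>)" 0] by simp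
  qed
  then show ?thesis
    unfolding y(3) using y(1,2) block_form_real[OF y(1,2)] by (intro coset_mat_in_coneI) auto
qed

definition block_sum :: "nat \<Rightarrow> (nat \<Rightarrow> 'h opmat) \<Rightarrow> 'h opmat" where
  "block_sum n f = (\<lambda>a b. if a < 2 \<and> b < 2 then (\<lambda>v. \<Sum>i<n. f i a b v) else zop)"

lemma block_sum_apply: "a < 2 \<Longrightarrow> b < 2 \<Longrightarrow> block_sum n f a b v = (\<Sum>i<n. f i a b v)"
  by (simp add: block_sum_def)

lemma block_sum_in_M2:
  assumes "\<And>i. i < n \<Longrightarrow> f i \<in> M2"
  shows "block_sum n f \<in> M2"
proof -
  have "(\<lambda>v. \<Sum>i<n. f i a b v) \<in> V" if "a < 2" "b < 2" for a b
    using assms that by (intro sum_in_V) (auto intro: opmats_entry)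
  then show ?thesis
    unfolding opmats_def block_sum_def by auto
qed

definition block_sum_list :: "nat list \<Rightarrow> (nat \<Rightarrow> 'h opmat) \<Rightarrow> 'h opmat" where
  "block_sum_list xs f =
    (\<lambda>a b. if a < 2 \<and> b < 2 then (\<lambda>v. sum_list (map (\<lambda>i. f i a b v) xs)) else zop)"

lemma foldr_add_coset:
  assumes "\<And>i. i \<in> set xs \<Longrightarrow> f i \<in> M2"
  shows "foldr (add Q) (map (\<lambda>i. cls (f i)) xs) (cls zero2) = cls (block_sum_list xs f)
    \<and> block_sum_list xs f \<in> M2"
  using assms
proof (induction xs)
  case Nil
  have "block_sum_list [] f = zero2"
    by (intro ext) (simp add: block_sum_list_def zop_def)
  then show ?case
    using opmats_zero by simp
next
  case (Cons x xs)
  then have IH: "foldr (add Q) (map (\<lambda>i. cls (f i)) xs) (cls zero2) = cls (block_sum_list xs f)"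
      "block_sum_list xs f \<in> M2"
    and fx: "f x \<in> M2" by auto
  have "opmat_add 2 (f x) (block_sum_list xs f) = block_sum_list (x # xs) f"
    by (intro ext) (simp add: opmat_add_def opadd_def block_sum_list_def)
  then show ?case
    using IH fx opmats_add[OF fx IH(2)] by (simp add: quotient_add_coset)
qed

lemma wsum_coset:
  assumes "\<And>i. i < n \<Longrightarrow> f i \<in> M2"
  shows "wsum Q (\<lambda>i. cls (f i)) n = cls (block_sum n f)"
proof -
  have "block_sum_list [0..<n] f = block_sum n f"
    by (intro ext) (simp add: block_sum_list_def block_sum_def atLeast0LessThan
        sum_set_upt_conv_sum_list_nat[symmetric])
  then show ?thesis
    unfolding wsum_def quotient_zero using foldr_add_coset[of "[0..<n]" f] assms by simp
qed

lemma wsum_cong: "(\<And>i. i < n \<Longrightarrow> f i = g i) \<Longrightarrow> wsum S f n = wsum S g n"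
  unfolding wsum_def by (metis (mono_tags, lifting) atLeastLessThan_iff map_eq_conv set_upt)

lemma block_form_expand:
  assumes y: "y \<in> blocks n"
  shows "block_form n y \<xi> = (\<Sum>a<2. \<Sum>i<n. \<Sum>b<2. \<Sum>j<n.
           cinner (pq a (y i j a b (pq b (\<xi> (b*n+j))))) (\<xi> (a*n+i)))"
proof -
  have "block_form n y \<xi> = (\<Sum>a<2. \<Sum>i<n. \<Sum>b<2. \<Sum>j<n. cinner (pq_diag_entry p n (a*n+i)
      (shuffle n y (a*n+i) (b*n+j) (pq_diag_entry p n (b*n+j) (\<xi> (b*n+j))))) (\<xi> (a*n+i)))"
    unfolding block_form_def compression_form_def by (simp only: sum_lessThan_2n[of _ n])
  also have "\<dots> = (\<Sum>a<2. \<Sum>i<n. \<Sum>b<2. \<Sum>j<n.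
           cinner (pq a (y i j a b (pq b (\<xi> (b*n+j))))) (\<xi> (a*n+i)))"
  proof (intro sum.cong refl)
    fix a i b j :: nat assume "a \<in> {..<2}" "i \<in> {..<n}" "b \<in> {..<2}" "j \<in> {..<n}"
    then have ab: "a < 2" "i < n" "b < 2" "j < n" by auto
    show "cinner (pq_diag_entry p n (a*n+i)
          (shuffle n y (a*n+i) (b*n+j) (pq_diag_entry p n (b*n+j) (\<xi> (b*n+j))))) (\<xi> (a*n+i))
        = cinner (pq a (y i j a b (pq b (\<xi> (b*n+j))))) (\<xi> (a*n+i))"
      unfolding pq_entry_div[OF block_index_less[OF ab(2,1)]] pq_entry_div[OF block_index_less[OF ab(4,3)]]
        shuffle_apply[OF ab(2,4,1,3)] block_index_div[OF ab(2)] block_index_div[OF ab(4)] ..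
  qed
  finally show ?thesis .
qed

definition block_congr ::
    "nat \<Rightarrow> nat \<Rightarrow> (nat \<Rightarrow> nat \<Rightarrow> complex) \<Rightarrow> (nat \<Rightarrow> nat \<Rightarrow> 'h opmat) \<Rightarrow> nat \<Rightarrow> nat \<Rightarrow> 'h opmat" where
  "block_congr n m \<alpha> y = (\<lambda>k l. if k < m \<and> l < m
     then block_sum n (\<lambda>i. block_sum n (\<lambda>j. opmat_scale 2 (cnj (\<alpha> i k) * \<alpha> j l) (y i j)))
     else zero2)"

text \<open>\<open>\<xi> \<in> H\<^sup>2\<^sup>m \<mapsto> (I\<^sub>2 \<otimes> \<alpha>) \<xi> \<in> H\<^sup>2\<^sup>n\<close> in the shuffled indexing (\<open>b*m + l\<close>, resp. \<open>b*n + j\<close>):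
  the form of the congruence \<open>\<alpha>\<^sup>* y \<alpha>\<close> at \<open>\<xi>\<close> is the form of \<open>y\<close> at this vector.\<close>
definition congr_vec :: "nat \<Rightarrow> nat \<Rightarrow> (nat \<Rightarrow> nat \<Rightarrow> complex) \<Rightarrow> (nat \<Rightarrow> 'h) \<Rightarrow> nat \<Rightarrow> 'h" where
  "congr_vec n m \<alpha> \<xi> = (\<lambda>t. \<Sum>l<m. cscale (\<alpha> (t mod n) l) (\<xi> ((t div n) * m + l)))"

lemma block_congr_blocks:
  assumes y: "y \<in> blocks n"
  shows "block_congr n m \<alpha> y \<in> blocks m"
  unfolding blocks_def block_congr_def
  using y by (auto intro!: block_sum_in_M2 opmats_scale blocks_entry)

lemma block_congr_apply:
  "k < m \<Longrightarrow> l < m \<Longrightarrow> a < 2 \<Longrightarrow> b < 2 \<Longrightarrow>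
    block_congr n m \<alpha> y k l a b v = (\<Sum>i<n. \<Sum>j<n. cscale (cnj (\<alpha> i k) * \<alpha> j l) (y i j a b v))"
  by (simp add: block_congr_def block_sum_apply opmat_scale_apply)

lemma congr_coset_mat:
  assumes y: "y \<in> blocks n"
  shows "congr Q n m \<alpha> (coset_mat n y) = coset_mat m (block_congr n m \<alpha> y)"
proof (intro ext)
  fix k l
  show "congr Q n m \<alpha> (coset_mat n y) k l = coset_mat m (block_congr n m \<alpha> y) k l"
  proof (cases "k < m \<and> l < m")
    case True
    define f where "f = (\<lambda>i j. opmat_scale 2 (cnj (\<alpha> i k) * \<alpha> j l) (y i j))"
    have f: "f i j \<in> M2" if "i < n" "j < n" for i j
      unfolding f_def using that by (intro opmats_scale blocks_entry[OF y])
    have "wsum Q (\<lambda>i. wsum Q (\<lambda>j. scale Q (cnj (\<alpha> i k) * \<alpha> j l) (coset_mat n y i j)) n) n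
        = wsum Q (\<lambda>i. wsum Q (\<lambda>j. cls (f i j)) n) n"
      by (intro wsum_cong) (simp add: coset_mat_def quotient_scale_coset blocks_entry[OF y] f_def)
    also have "\<dots> = wsum Q (\<lambda>i. cls (block_sum n (f i))) n"
      using f by (intro wsum_cong wsum_coset)
    also have "\<dots> = cls (block_sum n (\<lambda>i. block_sum n (f i)))"
      using f by (intro wsum_coset block_sum_in_M2)
    finally show ?thesis
      using True by (simp add: congr_def coset_mat_def block_congr_def f_def)
  next
    case False
    then show ?thesis by (auto simp: congr_def coset_mat_def quotient_zero)
  qed
qed

lemma block_hermitian_congr:
  assumes y: "y \<in> blocks n" and herm: "block_hermitian n y"
  shows "block_hermitian m (block_congr n m \<alpha> y)"
  unfolding block_hermitian_def
proof (intro allI impI)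
  fix k l a b :: nat assume kl: "k < m" "l < m" "a < 2" "b < 2"
  have herm_y: "adj (y i j b a) = y j i a b" if "i < n" "j < n" for i j
    using herm that kl(3,4) unfolding block_hermitian_def by metis
  have Vy: "y i j b a \<in> V" if "i < n" "j < n" for i j
    using opmats_entry[OF blocks_entry[OF y that] kl(4) kl(3)] .
  have "adj (block_congr n m \<alpha> y l k b a) = block_congr n m \<alpha> y k l a b"
  proof (rule adj_eqI)
    fix u w
    have "cinner (block_congr n m \<alpha> y l k b a u) w
        = (\<Sum>i<n. \<Sum>j<n. cnj (\<alpha> i l) * \<alpha> j k * cinner u (y j i a b w))"
      using kl by (simp add: block_congr_apply cinner_sum_left cinner_cscale_left
          V_cinner_adj_right[OF Vy] herm_y)
    also have "\<dots> = (\<Sum>j<n. \<Sum>i<n. cnj (cnj (\<alpha> j k) * \<alpha> i l) * cinner u (y j i a b w))"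
      by (subst sum.swap) (simp add: mult.commute)
    also have "\<dots> = cinner u (block_congr n m \<alpha> y k l a b w)"
      using kl by (simp add: block_congr_apply cinner_sum_right cinner_cscale_right)
    finally show "cinner (block_congr n m \<alpha> y l k b a u) w = cinner u (block_congr n m \<alpha> y k l a b w)" .
  qed
  then show "block_congr n m \<alpha> y k l a b = adj (block_congr n m \<alpha> y l k b a)"
    by simp
qed

lemma block_form_congr:
  assumes y: "y \<in> blocks n"
  shows "block_form m (block_congr n m \<alpha> y) \<xi> = block_form n y (congr_vec n m \<alpha> \<xi>)"
proof -
  define c where "c = (\<lambda>i j k l. cnj (\<alpha> i k) * \<alpha> j l)"
  define T where "T = (\<lambda>a b i j k l. cinner (pq a (y i j a b (pq b (\<xi> (b*m+l))))) (\<xi> (a*m+k)))"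
  have "block_form m (block_congr n m \<alpha> y) \<xi>
      = (\<Sum>a<2. \<Sum>k<m. \<Sum>b<2. \<Sum>l<m. \<Sum>i<n. \<Sum>j<n. c i j k l * T a b i j k l)"
    unfolding block_form_expand[OF block_congr_blocks[OF y]]
    by (intro sum.cong refl) (simp add: block_congr_apply V_sum[OF pq_entry_in_V]
        V_scale[OF pq_entry_in_V] cinner_sum_left cinner_cscale_left T_def c_def)
  also have "\<dots> = (\<Sum>a<2. \<Sum>b<2. \<Sum>k<m. \<Sum>l<m. \<Sum>i<n. \<Sum>j<n. c i j k l * T a b i j k l)"
    by (rule sum.cong[OF refl], rule sum.swap)
  also have "\<dots> = (\<Sum>a<2. \<Sum>b<2. \<Sum>i<n. \<Sum>j<n. \<Sum>k<m. \<Sum>l<m. c i j k l * T a b i j k l)"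
    by (rule sum.cong[OF refl], rule sum.cong[OF refl], rule sum_swap4)
  also have "\<dots> = (\<Sum>a<2. \<Sum>i<n. \<Sum>b<2. \<Sum>j<n. \<Sum>k<m. \<Sum>l<m. c i j k l * T a b i j k l)"
    by (rule sum.cong[OF refl], rule sum.swap)
  also have "\<dots> = block_form n y (congr_vec n m \<alpha> \<xi>)"
    unfolding block_form_expand[OF y]
  proof (intro sum.cong refl)
    fix a i b j :: nat assume "a \<in> {..<2}" "i \<in> {..<n}" "b \<in> {..<2}" "j \<in> {..<n}"
    then have ab: "a < 2" "i < n" "b < 2" "j < n" by auto
    have Vy: "y i j a b \<in> V"
      using opmats_entry[OF blocks_entry[OF y ab(2) ab(4)] ab(1) ab(3)] .
    show "(\<Sum>k<m. \<Sum>l<m. c i j k l * T a b i j k l)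
        = cinner (pq a (y i j a b (pq b (congr_vec n m \<alpha> \<xi> (b*n+j))))) (congr_vec n m \<alpha> \<xi> (a*n+i))"
      using ab by (simp add: congr_vec_def V_sum[OF pq_entry_in_V] V_scale[OF pq_entry_in_V] V_sum[OF Vy]
          V_scale[OF Vy] cinner_sum_left cinner_sum_right cinner_cscale_left cinner_cscale_right
          T_def c_def sum_distrib_left mult_ac)
  qed
  finally show ?thesis .
qed

lemma quotient_cone_congr:
  assumes X: "X \<in> cone Q n"
  shows "congr Q n m \<alpha> X \<in> cone Q m"
proof -
  obtain y where y: "y \<in> blocks n" "X = coset_mat n y" "block_hermitian n y"
    "\<And>\<xi>. Im (block_form n y \<xi>) = 0" "\<And>\<xi>. 0 \<le> Re (block_form n y \<xi>)"
    using X by (rule quotient_coneE) blast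
  show ?thesis
    unfolding y(2) congr_coset_mat[OF y(1)]
    by (intro coset_mat_in_coneI block_congr_blocks block_hermitian_congr y(1,3))
      (simp_all add: block_form_congr y(1,4,5))
qed

end

theorem theorem3p13:
  fixes V :: "('h::chilbert) op set" and p :: "'h op"
  assumes "concrete_opsys V" and "p \<in> V" and "is_projection p"
  shows "operator_system (quotient_osys V p)"
proof -
  interpret proj_quotient V p
    using assms by (rule proj_quotient.intro)
  show ?thesis
    unfolding operator_system_def matrix_ordered_def archimedean_matrix_order_unit_def
  proof (intro conjI allI impI ballI)
    show "star_vector_space Q" by (rule quotient_star_vector_space)
    show "cone Q n \<subseteq> hermitians Q n" for n by (rule quotient_cone_hermitian)
    show "madd Q n X Y \<in> cone Q n" if "X \<in> cone Q n" "Y \<in> cone Q n" for n X Y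
      using that by (rule quotient_cone_add)
    show "mscale Q n (complex_of_real r) X \<in> cone Q n" if "X \<in> cone Q n" "0 \<le> r" for n r X
      using that by (rule quotient_cone_scale)
    show "cone Q n \<inter> {X. mscale Q n (-1) X \<in> cone Q n} = {mzero Q}" for n
      by (rule quotient_cone_proper)
    show "congr Q n m \<alpha> X \<in> cone Q m" if "X \<in> cone Q n" for n m \<alpha> X
      using that by (rule quotient_cone_congr)
    show "unit Q \<in> carrier Q" by (rule quotient_unit_carrier)
    show "star Q (unit Q) = unit Q" by (rule quotient_unit_star)
    show "\<exists>r. 0 < r \<and> madd Q n (mscale Q n (complex_of_real r) (unitmat Q n)) X \<in> cone Q n"
      if "X \<in> hermitians Q n" for n X
      using that by (rule quotient_order_unit)
    show "X \<in> cone Q n"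
      if "X \<in> hermitians Q n"
        "\<forall>r. 0 < r \<longrightarrow> madd Q n (mscale Q n (complex_of_real r) (unitmat Q n)) X \<in> cone Q n"
      for n X
      using that by (rule quotient_archimedean)
  qed
qed

end
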